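(* Let $G$ be a group and $\xi:G\to\mathbb{R}$ a homomorphism. The projection $p:K_1(\widehat{\mathbb{Z}G}_\xi)\to\overline{K}_1^G(\widehat{\mathbb{Z}G}_\xi)$ restricted to $W$ induces an isomorphism $W\to\overline{W}$.
   Context: $\widehat{\mathbb{Z}G}_\xi$ is the Novikov ring: functions $\lambda:G\to\mathbb{Z}$ such that for every $r\in\mathbb{R}$ only finitely many $g$ with $\xi(g)\ge r$ have $\lambda(g)\neq0$, with pointwise addition and product $(\lambda\mu)(g)=\sum_{h_1h_2=g}\lambda(h_1)\mu(h_2)$. The norm is $\|\lambda\|=\inf\{t>0:\xi(g)\le\log t\text{ whenever }\lambda(g)\ne0\}$. For $\|a\|<1$, $1-a$ is a unit (inverse $\sum_{k\ge0}a^k$) and these units form a group. $W\subset K_1(\widehat{\mathbb{Z}G}_\xi)$ is the image of this group, $\overline{K}_1^G(\widehat{\mathbb{Z}G}_\xi)=K_1(\widehat{\mathbb{Z}G}_\xi)/\langle\pm[g]:g\in G\rangle$, and $\overline W=p(W)$. *)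

theory Defs
  imports Complex_Main "HOL-Algebra.Coset" "HOL-Algebra.Ring" "HOL-Algebra.Generated_Groups"
begin

definition nov_carrier :: "('g,'b) monoid_scheme \<Rightarrow> ('g \<Rightarrow> real) \<Rightarrow> ('g \<Rightarrow> int) set" where
  "nov_carrier G \<xi> = {f. (\<forall>g. g \<notin> carrier G \<longrightarrow> f g = 0) \<and>
      (\<forall>r::real. finite {g \<in> carrier G. \<xi> g \<ge> r \<and> f g \<noteq> 0})}"

text \<open>(f h)(g) = sum over h1 h2 = g of f(h1) h(h2), i.e. over h1 with h2 = inv h1 * g.\<close>
definition nov_mult :: "('g,'b) monoid_scheme \<Rightarrow> ('g \<Rightarrow> int) \<Rightarrow> ('g \<Rightarrow> int) \<Rightarrow> 'g \<Rightarrow> int" where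
  "nov_mult G f h = (\<lambda>g. if g \<in> carrier G then
      (\<Sum>k \<in> {k \<in> carrier G. f k \<noteq> 0 \<and> h (inv\<^bsub>G\<^esub> k \<otimes>\<^bsub>G\<^esub> g) \<noteq> 0}.
          f k * h (inv\<^bsub>G\<^esub> k \<otimes>\<^bsub>G\<^esub> g))
      else 0)"

definition novikov_ring :: "('g,'b) monoid_scheme \<Rightarrow> ('g \<Rightarrow> real) \<Rightarrow> ('g \<Rightarrow> int) ring" where
  "novikov_ring G \<xi> = \<lparr>carrier = nov_carrier G \<xi>, mult = nov_mult G,
      one = (\<lambda>g. if g = \<one>\<^bsub>G\<^esub> then 1 else 0),
      zero = (\<lambda>_. 0), add = (\<lambda>f h g. f g + h g)\<rparr>"

definition nov_norm :: "('g \<Rightarrow> real) \<Rightarrow> ('g \<Rightarrow> int) \<Rightarrow> real" where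
  "nov_norm \<xi> f = Inf {t::real. t > 0 \<and> (\<forall>g. f g \<noteq> 0 \<longrightarrow> \<xi> g \<le> ln t)}"

text \<open>Infinite matrices over R that differ from the identity in only finitely many
entries (this is GL(R) = union of the GL_n(R), stabilised).\<close>

definition mat_one :: "('a,'b) ring_scheme \<Rightarrow> nat \<Rightarrow> nat \<Rightarrow> 'a" where
  "mat_one R = (\<lambda>i j. if i = j then \<one>\<^bsub>R\<^esub> else \<zero>\<^bsub>R\<^esub>)"

definition finitary :: "('a,'b) ring_scheme \<Rightarrow> (nat \<Rightarrow> nat \<Rightarrow> 'a) \<Rightarrow> bool" where
  "finitary R A \<longleftrightarrow> (\<forall>i j. A i j \<in> carrier R) \<and> finite {(i,j). A i j \<noteq> mat_one R i j}"

definition mat_mult :: "('a,'b) ring_scheme \<Rightarrow> (nat \<Rightarrow> nat \<Rightarrow> 'a) \<Rightarrow> (nat \<Rightarrow> nat \<Rightarrow> 'a) \<Rightarrow> nat \<Rightarrow> nat \<Rightarrow> 'a" where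
  "mat_mult R A B = (\<lambda>i j. finsum R (\<lambda>k. A i k \<otimes>\<^bsub>R\<^esub> B k j) {k. A i k \<noteq> \<zero>\<^bsub>R\<^esub>})"

definition GL :: "('a,'b) ring_scheme \<Rightarrow> (nat \<Rightarrow> nat \<Rightarrow> 'a) monoid" where
  "GL R = \<lparr>carrier = {A. finitary R A \<and> (\<exists>B. finitary R B \<and>
              mat_mult R A B = mat_one R \<and> mat_mult R B A = mat_one R)},
           mult = mat_mult R, one = mat_one R\<rparr>"

definition elem_mat :: "('a,'b) ring_scheme \<Rightarrow> nat \<Rightarrow> nat \<Rightarrow> 'a \<Rightarrow> nat \<Rightarrow> nat \<Rightarrow> 'a" where
  "elem_mat R i j r = (mat_one R)(i := (mat_one R i)(j := r))"

definition EL :: "('a,'b) ring_scheme \<Rightarrow> (nat \<Rightarrow> nat \<Rightarrow> 'a) set" where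
  "EL R = generate (GL R) {elem_mat R i j r | i j r. i \<noteq> j \<and> r \<in> carrier R}"

definition K1 :: "('a,'b) ring_scheme \<Rightarrow> (nat \<Rightarrow> nat \<Rightarrow> 'a) set monoid" where
  "K1 R = GL R Mod EL R"

definition embed1 :: "('a,'b) ring_scheme \<Rightarrow> 'a \<Rightarrow> nat \<Rightarrow> nat \<Rightarrow> 'a" where
  "embed1 R u = (mat_one R)(0 := (mat_one R 0)(0 := u))"

definition k1_class :: "('a,'b) ring_scheme \<Rightarrow> 'a \<Rightarrow> (nat \<Rightarrow> nat \<Rightarrow> 'a) set" where
  "k1_class R u = EL R #>\<^bsub>GL R\<^esub> embed1 R u"

definition nov_small_units :: "('g,'b) monoid_scheme \<Rightarrow> ('g \<Rightarrow> real) \<Rightarrow> ('g \<Rightarrow> int) set" where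
  "nov_small_units G \<xi> = {(\<lambda>g. \<one>\<^bsub>novikov_ring G \<xi>\<^esub> g - a g) | a.
      a \<in> carrier (novikov_ring G \<xi>) \<and> nov_norm \<xi> a < 1}"

definition nov_W :: "('g,'b) monoid_scheme \<Rightarrow> ('g \<Rightarrow> real) \<Rightarrow> (nat \<Rightarrow> nat \<Rightarrow> ('g \<Rightarrow> int)) set set" where
  "nov_W G \<xi> = k1_class (novikov_ring G \<xi>) ` nov_small_units G \<xi>"

definition nov_trivial :: "('g,'b) monoid_scheme \<Rightarrow> ('g \<Rightarrow> real) \<Rightarrow> (nat \<Rightarrow> nat \<Rightarrow> ('g \<Rightarrow> int)) set set" where
  "nov_trivial G \<xi> = generate (K1 (novikov_ring G \<xi>))
      {k1_class (novikov_ring G \<xi>) (\<lambda>h. if h = g then s else 0) | g s.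
         g \<in> carrier G \<and> (s = 1 \<or> s = -1)}"

definition nov_proj :: "('g,'b) monoid_scheme \<Rightarrow> ('g \<Rightarrow> real) \<Rightarrow> (nat \<Rightarrow> nat \<Rightarrow> ('g \<Rightarrow> int)) set \<Rightarrow> (nat \<Rightarrow> nat \<Rightarrow> ('g \<Rightarrow> int)) set set" where
  "nov_proj G \<xi> x = nov_trivial G \<xi> #>\<^bsub>K1 (novikov_ring G \<xi>)\<^esub> x"

end

(* An element of W is the class of 1 - a, where a is supported on {xi < 0}.
   If p[1 - a] = p[1 - b], then in K_1 the class of 1 - a is that of (+-g)(1 - b) for some
   g in G, i.e. the 1x1 matrices satisfy (1 - a) = E ((+-g)(1 - b)) with E a product of
   elementary matrices.  Map the Novikov ring of G to that of the abelianization G/[G,G]; the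
   latter is commutative, and the determinant of a large upper-left block is unchanged by
   elementary row operations, so 1 - a' = (+-g')(1 - b') holds there.  Comparing the
   coefficients at 1 and at g' (both a' and b' live on {xi < 0}) forces the sign + and g' = 1,
   i.e. g lies in [G,G].  By Whitehead's lemma the class of g in K_1 is then trivial, so
   [1 - a] = [1 - b]. *)

theory Submission
  imports Defs "HOL-Combinatorics.Permutations"
begin

section \<open>Cosets of subgroups of units\<close>

lemma r_coset_units_of [simp]: "r_coset (units_of G) = r_coset G"
  by (simp add: r_coset_def units_of_def fun_eq_iff)

lemma set_mult_units_of [simp]: "set_mult (units_of G) = set_mult G"
  by (simp add: set_mult_def units_of_def fun_eq_iff)

context monoid
begin

lemma Units_inv_mult_cancel [simp]: "u \<in> Units G \<Longrightarrow> y \<in> carrier G \<Longrightarrow> inv u \<otimes> (u \<otimes> y) = y"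
  by (simp add: m_assoc[symmetric] Units_closed)

lemma Units_mult_inv_cancel [simp]: "u \<in> Units G \<Longrightarrow> y \<in> carrier G \<Longrightarrow> u \<otimes> (inv u \<otimes> y) = y"
  by (simp add: m_assoc[symmetric] Units_closed)

lemma subgroup_units_ofD:
  assumes H: "subgroup H (units_of G)"
  shows "H \<subseteq> Units G" "\<one> \<in> H" "\<And>h k. h \<in> H \<Longrightarrow> k \<in> H \<Longrightarrow> h \<otimes> k \<in> H"
    "\<And>h. h \<in> H \<Longrightarrow> inv h \<in> H"
proof -
  show sub: "H \<subseteq> Units G" using subgroup.subset[OF H] by (simp add: units_of_carrier)
  show "\<one> \<in> H" using subgroup.one_closed[OF H] by (simp add: units_of_one)
  show "\<And>h k. h \<in> H \<Longrightarrow> k \<in> H \<Longrightarrow> h \<otimes> k \<in> H"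
    using subgroup.m_closed[OF H] by (simp add: units_of_mult)
  show "\<And>h. h \<in> H \<Longrightarrow> inv h \<in> H"
    using subgroup.m_inv_closed[OF H] units_of_inv sub by (metis subsetD)
qed

lemma rcos_units_self:
  assumes "subgroup H (units_of G)" "x \<in> carrier G"
  shows "x \<in> H #> x"
  using subgroup_units_ofD(2)[OF assms(1)] assms(2) by (force simp: r_coset_def)

lemma rcos_units_mult_mem:
  assumes H: "subgroup H (units_of G)" and h: "h \<in> H" and y: "y \<in> carrier G"
  shows "H #> (h \<otimes> y) = H #> y"
proof -
  note Hu = subgroup_units_ofD[OF H]
  have hu: "h \<in> Units G" using Hu(1) h by blast
  show ?thesis
  proof (intro equalityI subsetI)
    fix x assume "x \<in> H #> (h \<otimes> y)"
    then obtain k where "k \<in> H" "x = k \<otimes> (h \<otimes> y)" by (auto simp: r_coset_def)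
    then show "x \<in> H #> y"
      using Hu h hu y by (force simp: r_coset_def m_assoc[symmetric] intro!: bexI[of _ "k \<otimes> h"])
  next
    fix x assume "x \<in> H #> y"
    then obtain k where k: "k \<in> H" "x = k \<otimes> y" by (auto simp: r_coset_def)
    have ku: "k \<in> Units G" using Hu(1) k(1) by blast
    have "(k \<otimes> inv h) \<otimes> (h \<otimes> y) = k \<otimes> ((inv h \<otimes> h) \<otimes> y)"
      using ku hu y by (simp add: m_assoc Units_closed)
    then have "x = (k \<otimes> inv h) \<otimes> (h \<otimes> y)"
      using ku k hu y by (simp add: Units_closed)
    then show "x \<in> H #> (h \<otimes> y)"
      using Hu h k by (auto simp: r_coset_def)
  qed
qed

lemma set_mult_rcos_units:
  assumes H: "subgroup H (units_of G)" and y: "y \<in> carrier G"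
  shows "H <#> (H #> y) = H #> y"
proof (intro equalityI subsetI)
  note Hu = subgroup_units_ofD[OF H]
  fix x assume "x \<in> H <#> (H #> y)"
  then obtain h k where hk: "h \<in> H" "k \<in> H" "x = h \<otimes> (k \<otimes> y)"
    by (auto simp: set_mult_def r_coset_def)
  have "h \<in> Units G" "k \<in> Units G" using hk Hu(1) by auto
  then have "x = (h \<otimes> k) \<otimes> y" using hk y by (simp add: m_assoc Units_closed)
  then show "x \<in> H #> y" using hk Hu(3) by (auto simp: r_coset_def)
next
  note Hu = subgroup_units_ofD[OF H]
  fix x assume "x \<in> H #> y"
  then obtain h where h: "h \<in> H" "x = h \<otimes> y" by (auto simp: r_coset_def)
  have "x = \<one> \<otimes> (h \<otimes> y)" using h Hu(1) y by (auto simp: Units_closed)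
  then show "x \<in> H <#> (H #> y)" using h Hu(2) by (auto simp: set_mult_def r_coset_def)
qed

lemma rcos_mult_rcos_units:
  assumes H: "subgroup H (units_of G)" and a: "a \<in> Units G" and b: "b \<in> carrier G"
    and conj: "\<And>h. h \<in> H \<Longrightarrow> a \<otimes> h \<otimes> inv a \<in> H"
  shows "(H #> a) <#> (H #> b) = H #> (a \<otimes> b)"
proof (intro equalityI subsetI)
  note Hu = subgroup_units_ofD[OF H]
  fix x assume "x \<in> (H #> a) <#> (H #> b)"
  then obtain h k where hk: "h \<in> H" "k \<in> H" "x = (h \<otimes> a) \<otimes> (k \<otimes> b)"
    by (auto simp: set_mult_def r_coset_def)
  have hku: "h \<in> Units G" "k \<in> Units G" using hk Hu(1) by auto
  have "x = (h \<otimes> (a \<otimes> k \<otimes> inv a)) \<otimes> (a \<otimes> b)"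
    using hk hku a b by (simp add: m_assoc Units_closed)
  then show "x \<in> H #> (a \<otimes> b)"
    using hk conj Hu(3) by (auto simp: r_coset_def)
next
  note Hu = subgroup_units_ofD[OF H]
  fix x assume "x \<in> H #> (a \<otimes> b)"
  then obtain h where h: "h \<in> H" "x = h \<otimes> (a \<otimes> b)" by (auto simp: r_coset_def)
  have "x = (h \<otimes> a) \<otimes> (\<one> \<otimes> b)" using h Hu(1) a b by (auto simp: m_assoc Units_closed)
  then show "x \<in> (H #> a) <#> (H #> b)"
    using h Hu(2) by (auto simp: set_mult_def r_coset_def)
qed

lemma rcos_units_mult_mem_right:
  assumes H: "subgroup H (units_of G)" and a: "a \<in> Units G"
    and conj: "\<And>h. h \<in> H \<Longrightarrow> a \<otimes> h \<otimes> inv a \<in> H" and c: "c \<in> H"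
  shows "H #> (a \<otimes> c) = H #> a"
proof -
  have "c \<in> carrier G" using c subgroup_units_ofD(1)[OF H] by blast
  then have c1: "c \<otimes> \<one> = c" "c \<in> carrier G" by simp_all
  have "H #> (a \<otimes> c) = (H #> a) <#> (H #> (c \<otimes> \<one>))"
    using rcos_mult_rcos_units[OF H a _ conj] c1 by simp
  also have "\<dots> = (H #> a) <#> (H #> \<one>)"
    using rcos_units_mult_mem[OF H c, of \<one>] by simp
  also have "\<dots> = H #> a"
    using rcos_mult_rcos_units[OF H a _ conj] Units_closed[OF a] by simp
  finally show ?thesis .
qed

lemma inv_units_Mod_rcos:
  assumes H: "subgroup H (units_of G)" and a: "a \<in> Units G"
    and conj: "\<And>h. h \<in> H \<Longrightarrow> a \<otimes> h \<otimes> inv a \<in> H"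
    and conj_inv: "\<And>h. h \<in> H \<Longrightarrow> inv a \<otimes> h \<otimes> a \<in> H"
  shows "inv\<^bsub>units_of G Mod H\<^esub> (H #> a) = H #> inv a"
proof -
  note Hu = subgroup_units_ofD[OF H]
  have ia: "inv a \<in> Units G" using a by simp
  have conj_ia: "\<And>h. h \<in> H \<Longrightarrow> inv a \<otimes> h \<otimes> inv (inv a) \<in> H" using conj_inv a by simp
  have H_one: "H #> \<one> = H" using Hu(1) by (force simp: r_coset_def)
  show ?thesis
    unfolding m_inv_def[of "units_of G Mod H"]
  proof (rule the_equality)
    show "H #> inv a \<in> carrier (units_of G Mod H) \<and>
      (H #> a) \<otimes>\<^bsub>units_of G Mod H\<^esub> (H #> inv a) = \<one>\<^bsub>units_of G Mod H\<^esub> \<and>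
      (H #> inv a) \<otimes>\<^bsub>units_of G Mod H\<^esub> (H #> a) = \<one>\<^bsub>units_of G Mod H\<^esub>"
      using ia rcos_mult_rcos_units[OF H a _ conj] rcos_mult_rcos_units[OF H ia _ conj_ia] a H_one
        Units_closed[OF a] Units_closed[OF ia]
      by (auto simp: FactGroup_def RCOSETS_def units_of_carrier)
  next
    fix y assume "y \<in> carrier (units_of G Mod H) \<and>
      (H #> a) \<otimes>\<^bsub>units_of G Mod H\<^esub> y = \<one>\<^bsub>units_of G Mod H\<^esub> \<and>
      y \<otimes>\<^bsub>units_of G Mod H\<^esub> (H #> a) = \<one>\<^bsub>units_of G Mod H\<^esub>"
    then obtain b where b: "b \<in> Units G" "y = H #> b" and ab: "(H #> a) <#> (H #> b) = H"
      by (auto simp: FactGroup_def RCOSETS_def units_of_carrier)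
    have "H #> (a \<otimes> b) = H" using ab rcos_mult_rcos_units[OF H a _ conj] b by auto
    then have abH: "a \<otimes> b \<in> H" using rcos_units_self[OF H, of "a \<otimes> b"] a b by auto
    have "y = H #> (inv a \<otimes> (a \<otimes> b))" using a b by (simp add: m_assoc[symmetric] Units_closed)
    then show "y = H #> inv a" using rcos_units_mult_mem_right[OF H ia conj_ia abH] by simp
  qed
qed

end

context group
begin

lemma generate_conj_closed:
  assumes a: "a \<in> carrier G" and S: "S \<subseteq> carrier G"
    and gens: "\<And>s. s \<in> S \<Longrightarrow> a \<otimes> s \<otimes> inv a \<in> generate G S"
    and x: "x \<in> generate G S"
  shows "a \<otimes> x \<otimes> inv a \<in> generate G S"
  using x
proof (induction x rule: generate.induct)
  case one
  then show ?case using a by (simp add: generate.one)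
next
  case (incl s)
  then show ?case by (rule gens)
next
  case (inv s)
  then have "inv (a \<otimes> s \<otimes> inv a) \<in> generate G S"
    using gens generate_m_inv_closed[OF S] by blast
  then show ?case using a inv S by (auto simp: inv_mult_group m_assoc)
next
  case (eng x y)
  have xy: "x \<in> carrier G" "y \<in> carrier G" using eng.hyps generate_in_carrier[OF S] by auto
  have "a \<otimes> (x \<otimes> y) \<otimes> inv a = (a \<otimes> x \<otimes> inv a) \<otimes> (a \<otimes> y \<otimes> inv a)"
    using a xy by (simp add: m_assoc)
  then show ?case using eng.IH generate.eng by metis
qed

end

section \<open>Determinants over a commutative ring\<close>

lemma (in comm_monoid) finprod_remove:
  assumes "finite I" "i \<in> I" "f \<in> I \<rightarrow> carrier G"
  shows "finprod G f I = f i \<otimes> finprod G f (I - {i})"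
proof -
  have "finprod G f I = finprod G f (insert i (I - {i}))" using assms by (simp add: insert_absorb)
  also have "\<dots> = f i \<otimes> finprod G f (I - {i})" using assms by (intro finprod_insert) auto
  finally show ?thesis .
qed

context cring
begin

definition perm_sign :: "(nat \<Rightarrow> nat) \<Rightarrow> 'a" where
  "perm_sign p = (if evenperm p then \<one> else \<ominus> \<one>)"

definition detn :: "nat \<Rightarrow> (nat \<Rightarrow> nat \<Rightarrow> 'a) \<Rightarrow> 'a" where
  "detn n A = (\<Oplus>p\<in>{p. p permutes {..<n}}. perm_sign p \<otimes> (\<Otimes>i\<in>{..<n}. A i (p i)))"

lemma perm_sign_closed [simp]: "perm_sign p \<in> carrier R"
  by (simp add: perm_sign_def)

lemma detn_closed: "(\<And>l m. A l m \<in> carrier R) \<Longrightarrow> detn n A \<in> carrier R"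
  unfolding detn_def by (auto intro!: finsum_closed finprod_closed)

lemma finprod_row_upd:
  assumes i: "i < (n::nat)" and A: "\<And>l m. A l m \<in> carrier R" and z: "\<And>m. z m \<in> carrier R"
  shows "(\<Otimes>l\<in>{..<n}. (A(i := z)) l (p l)) = z (p i) \<otimes> (\<Otimes>l\<in>{..<n} - {i}. A l (p l))"
proof -
  have "(\<Otimes>l\<in>{..<n}. (A(i := z)) l (p l)) = (A(i := z)) i (p i) \<otimes> (\<Otimes>l\<in>{..<n} - {i}. (A(i := z)) l (p l))"
    by (rule finprod_remove) (use i A z in \<open>auto simp: Pi_def\<close>)
  also have "(\<Otimes>l\<in>{..<n} - {i}. (A(i := z)) l (p l)) = (\<Otimes>l\<in>{..<n} - {i}. A l (p l))"
    by (intro finprod_cong') (use A in auto)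
  finally show ?thesis by simp
qed

lemma detn_row_linear:
  assumes i: "i < n" and A: "\<And>l m. A l m \<in> carrier R" and x: "\<And>m. x m \<in> carrier R"
    and y: "\<And>m. y m \<in> carrier R" and r: "r \<in> carrier R"
  shows "detn n (A(i := (\<lambda>m. x m \<oplus> r \<otimes> y m))) = detn n (A(i := x)) \<oplus> r \<otimes> detn n (A(i := y))"
proof -
  let ?P = "{p. p permutes {..<n}}"
  let ?Q = "\<lambda>p. (\<Otimes>l\<in>{..<n} - {i}. A l (p l))"
  have Q: "?Q p \<in> carrier R" for p using A by (auto intro!: finprod_closed)
  have expand: "(\<Otimes>l\<in>{..<n}. (A(i := z)) l (p l)) = z (p i) \<otimes> ?Q p"
    if "\<And>m. z m \<in> carrier R" for z p
    using finprod_row_upd[OF i A that] .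
  have "detn n (A(i := (\<lambda>m. x m \<oplus> r \<otimes> y m)))
      = (\<Oplus>p\<in>?P. perm_sign p \<otimes> (x (p i) \<otimes> ?Q p) \<oplus> r \<otimes> (perm_sign p \<otimes> (y (p i) \<otimes> ?Q p)))"
    unfolding detn_def
  proof (intro finsum_cong')
    fix p
    show "perm_sign p \<otimes> (\<Otimes>l\<in>{..<n}. (A(i := (\<lambda>m. x m \<oplus> r \<otimes> y m))) l (p l))
        = perm_sign p \<otimes> (x (p i) \<otimes> ?Q p) \<oplus> r \<otimes> (perm_sign p \<otimes> (y (p i) \<otimes> ?Q p))"
      using expand[of "\<lambda>m. x m \<oplus> r \<otimes> y m" p] x y r Q[of p] by (simp add: l_distr r_distr m_assoc m_lcomm)
  qed (use x y Q r in auto)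
  also have "\<dots> = (\<Oplus>p\<in>?P. perm_sign p \<otimes> (x (p i) \<otimes> ?Q p)) \<oplus> r \<otimes> (\<Oplus>p\<in>?P. perm_sign p \<otimes> (y (p i) \<otimes> ?Q p))"
    using x y Q r by (simp add: finsum_addf finsum_rdistr finite_permutations)
  also have "\<dots> = detn n (A(i := x)) \<oplus> r \<otimes> detn n (A(i := y))"
    unfolding detn_def using expand[OF x] expand[OF y] by simp
  finally show ?thesis .
qed

text \<open>The permutations of \<open>{..<n}\<close> split into even ones and their composites with the
  transposition of the two equal rows; the terms of each pair cancel.\<close>

lemma detn_equal_rows:
  assumes ij: "i \<noteq> j" "i < n" "j < n" and A: "\<And>l m. A l m \<in> carrier R" and eq: "A i = A j"
  shows "detn n A = \<zero>"
proof -
  define t where "t = transpose i j"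
  let ?T = "\<lambda>p. perm_sign p \<otimes> (\<Otimes>l\<in>{..<n}. A l (p l))"
  let ?E = "{p. p permutes {..<n} \<and> evenperm p}" and ?O = "{p. p permutes {..<n} \<and> \<not> evenperm p}"
  have t: "t permutes {..<n}" unfolding t_def using ij by (intro permutes_swap_id) auto
  have tt: "t \<circ> t = id" unfolding t_def by (simp add: fun_eq_iff)
  have odd_t: "\<not> evenperm t" unfolding t_def using ij by (simp add: evenperm_swap)
  have T: "?T p \<in> carrier R" for p using A by (auto intro!: finprod_closed)
  have fin: "finite ?E" "finite ?O" by (auto intro: finite_subset[OF _ finite_permutations])
  have evenperm_t: "evenperm (p \<circ> t) = (\<not> evenperm p)" if "p permutes {..<n}" for p
    using evenperm_comp[of p t] that t odd_t by (auto simp: permutation_permutes)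
  have odd_image: "?O = (\<lambda>p. p \<circ> t) ` ?E"
  proof (intro equalityI subsetI)
    fix q assume q: "q \<in> ?O"
    then have "q \<circ> t \<in> ?E" using permutes_compose[OF t] evenperm_t by auto
    moreover have "q = (q \<circ> t) \<circ> t" by (simp add: comp_assoc tt)
    ultimately show "q \<in> (\<lambda>p. p \<circ> t) ` ?E" by blast
  qed (use permutes_compose[OF t] evenperm_t in auto)
  have inj: "inj_on (\<lambda>p. p \<circ> t) ?E"
    by (intro inj_onI) (metis comp_assoc comp_id tt)
  have T_swap: "?T (p \<circ> t) = \<ominus> ?T p" if p: "p \<in> ?E" for p
  proof -
    have "A (t l) = A l" for l
      unfolding t_def using eq by (cases "l = i"; cases "l = j") (auto simp: transpose_def)
    then have "(\<Otimes>l\<in>{..<n}. A l ((p \<circ> t) l)) = (\<Otimes>l\<in>{..<n}. A (t l) (p (t l)))"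
      by (intro finprod_cong') (use A in auto)
    also have "\<dots> = (\<Otimes>l\<in>t ` {..<n}. A l (p l))"
      by (rule finprod_reindex[symmetric]) (use A permutes_inj_on[OF t] in auto)
    also have "t ` {..<n} = {..<n}" using permutes_image[OF t] .
    finally show ?thesis
      using p evenperm_t A by (simp add: perm_sign_def l_minus finprod_closed)
  qed
  have "detn n A = (\<Oplus>p\<in>?E. ?T p) \<oplus> (\<Oplus>p\<in>?O. ?T p)"
    unfolding detn_def using fin T
    by (subst finsum_Un_disjoint[symmetric]) (auto intro!: finsum_cong)
  also have "(\<Oplus>p\<in>?O. ?T p) = (\<Oplus>p\<in>?E. \<ominus> ?T p)"
  proof -
    have "(\<Oplus>p\<in>(\<lambda>p. p \<circ> t) ` ?E. ?T p) = (\<Oplus>p\<in>?E. ?T (p \<circ> t))"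
      using inj T by (intro finsum_reindex) auto
    also have "\<dots> = (\<Oplus>p\<in>?E. \<ominus> ?T p)"
      using T T_swap by (intro finsum_cong') auto
    finally show ?thesis unfolding odd_image .
  qed
  also have "(\<Oplus>p\<in>?E. ?T p) \<oplus> (\<Oplus>p\<in>?E. \<ominus> ?T p) = \<zero>"
    using T by (simp add: finsum_addf[symmetric] r_neg)
  finally show ?thesis .
qed

lemma detn_add_row_multiple:
  assumes ij: "i \<noteq> j" "i < n" "j < n" and A: "\<And>l m. A l m \<in> carrier R" and r: "r \<in> carrier R"
  shows "detn n (A(i := (\<lambda>m. A i m \<oplus> r \<otimes> A j m))) = detn n A"
proof -
  have "detn n (A(i := A j)) = \<zero>"
    by (rule detn_equal_rows[OF ij]) (use A ij in auto)
  then show ?thesis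
    using detn_row_linear[of i n A "A i" "A j" r] ij A r detn_closed[OF A] by simp
qed

lemma detn_diagonal:
  assumes A: "\<And>l m. A l m \<in> carrier R" and off: "\<And>l m. l \<noteq> m \<Longrightarrow> A l m = \<zero>"
  shows "detn n A = (\<Otimes>l\<in>{..<n}. A l l)"
proof -
  have vanish: "perm_sign p \<otimes> (\<Otimes>l\<in>{..<n}. A l (p l)) = \<zero>" if p: "p permutes {..<n}" "p \<noteq> id" for p
  proof -
    from p obtain l where l: "p l \<noteq> l" by (auto simp: fun_eq_iff)
    then have "l < n" using p by (auto simp: permutes_def)
    then show ?thesis
      using finprod_remove[of "{..<n}" l] off[OF l[symmetric]] A by (auto intro!: finprod_closed)
  qed
  have "detn n A = (\<Oplus>p\<in>{id}. perm_sign p \<otimes> (\<Otimes>l\<in>{..<n}. A l (p l)))"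
    unfolding detn_def using vanish A
    by (intro add.finprod_mono_neutral_cong_right) (auto simp: finite_permutations permutes_id intro!: finprod_closed)
  then show ?thesis using A by (simp add: perm_sign_def finprod_closed)
qed

end

section \<open>Finitary matrices and the elementary subgroup\<close>

text \<open>The coset lemmas are
  applied in this monoid because the matrix \<open>embed1 R (1 - a)\<close> representing an element of
  \<open>W\<close> is not known to be invertible here.\<close>

definition mat_monoid :: "('a, 'b) ring_scheme \<Rightarrow> (nat \<Rightarrow> nat \<Rightarrow> 'a) monoid" where
  "mat_monoid R = \<lparr>carrier = {A. finitary R A}, monoid.mult = mat_mult R, one = mat_one R\<rparr>"

lemma GL_eq_units_of: "GL R = units_of (mat_monoid R)"
  by (auto simp: GL_def units_of_def Units_def mat_monoid_def)

lemma GL_mult [simp]: "monoid.mult (GL R) = mat_mult R"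
  and GL_one [simp]: "one (GL R) = mat_one R"
  and GL_carrier: "carrier (GL R) = {A. finitary R A \<and>
    (\<exists>B. finitary R B \<and> mat_mult R A B = mat_one R \<and> mat_mult R B A = mat_one R)}"
  by (simp_all add: GL_def)

lemma (in abelian_monoid) finsum_swap:
  assumes "finite A" "finite B" "\<And>i j. i \<in> A \<Longrightarrow> j \<in> B \<Longrightarrow> f i j \<in> carrier G"
  shows "(\<Oplus>i\<in>A. \<Oplus>j\<in>B. f i j) = (\<Oplus>j\<in>B. \<Oplus>i\<in>A. f i j)"
  using assms
proof (induction A rule: finite_induct)
  case empty
  then show ?case by (simp add: finsum_zero)
next
  case (insert x F)
  have "(\<Oplus>i\<in>insert x F. \<Oplus>j\<in>B. f i j) = (\<Oplus>j\<in>B. f x j) \<oplus> (\<Oplus>j\<in>B. \<Oplus>i\<in>F. f i j)"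
    using insert by (subst finsum_insert) (auto intro!: finsum_closed)
  also have "\<dots> = (\<Oplus>j\<in>B. f x j \<oplus> (\<Oplus>i\<in>F. f i j))"
    using insert by (subst finsum_addf) (auto intro!: finsum_closed)
  also have "\<dots> = (\<Oplus>j\<in>B. \<Oplus>i\<in>insert x F. f i j)"
    using insert by (intro finsum_cong) (auto intro!: finsum_closed)
  finally show ?case .
qed

context ring
begin

lemma finitary_closed: "finitary R A \<Longrightarrow> A i j \<in> carrier R"
  by (simp add: finitary_def)

lemma mat_one_closed [simp]: "mat_one R i j \<in> carrier R"
  by (simp add: mat_one_def)

lemma finitary_mat_one [simp]: "finitary R (mat_one R)"
  by (simp add: finitary_def)

lemma finitary_row_finite: "finitary R A \<Longrightarrow> finite {k. A i k \<noteq> \<zero>}"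
proof -
  assume A: "finitary R A"
  have "{k. A i k \<noteq> \<zero>} \<subseteq> snd ` {(i,j). A i j \<noteq> mat_one R i j} \<union> {i}"
  proof
    fix k assume "k \<in> {k. A i k \<noteq> \<zero>}"
    then show "k \<in> snd ` {(i,j). A i j \<noteq> mat_one R i j} \<union> {i}"
      by (cases "k = i") (auto simp: mat_one_def image_iff intro!: bexI[of _ "(i,k)"])
  qed
  then show ?thesis
    using A unfolding finitary_def by (meson finite_Un finite_imageI finite.intros finite_subset)
qed

lemma mat_mult_eq_finsum:
  assumes "finite K" "{k. A i k \<noteq> \<zero>} \<subseteq> K" "\<And>k. A i k \<in> carrier R" "\<And>k. B k j \<in> carrier R"
  shows "mat_mult R A B i j = (\<Oplus>k\<in>K. A i k \<otimes> B k j)"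
  unfolding mat_mult_def
  by (rule add.finprod_mono_neutral_cong_left) (use assms in auto)

lemma mat_mult_closed: "finitary R A \<Longrightarrow> (\<And>k. B k j \<in> carrier R) \<Longrightarrow> mat_mult R A B i j \<in> carrier R"
  unfolding mat_mult_def by (auto intro!: finsum_closed simp: finitary_closed)

lemma mat_mult_row_diag:
  assumes "\<And>k. k \<noteq> i \<Longrightarrow> A i k = \<zero>" "A i i \<in> carrier R" "\<And>k. B k j \<in> carrier R"
  shows "mat_mult R A B i j = A i i \<otimes> B i j"
proof -
  have "A i k \<in> carrier R" for k using assms by (cases "k = i") auto
  then have "mat_mult R A B i j = (\<Oplus>k\<in>{i}. A i k \<otimes> B k j)"
    by (intro mat_mult_eq_finsum) (use assms in auto)
  then show ?thesis using assms by simp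
qed

lemma mat_mult_col_diag:
  assumes A: "finitary R A" and "\<And>k. k \<noteq> j \<Longrightarrow> B k j = \<zero>" "\<And>k. B k j \<in> carrier R"
  shows "mat_mult R A B i j = A i j \<otimes> B j j"
proof -
  have fin: "finite ({k. A i k \<noteq> \<zero>} \<union> {j})" using finitary_row_finite[OF A] by simp
  have "mat_mult R A B i j = (\<Oplus>k\<in>{k. A i k \<noteq> \<zero>} \<union> {j}. A i k \<otimes> B k j)"
    by (rule mat_mult_eq_finsum[OF fin]) (use assms finitary_closed[OF A] in auto)
  also have "\<dots> = (\<Oplus>k\<in>{j}. A i k \<otimes> B k j)"
    by (rule add.finprod_mono_neutral_cong_right[OF fin]) (use assms finitary_closed[OF A] in auto)
  finally show ?thesis using assms finitary_closed[OF A] by simp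
qed

lemma mat_mult_one_left: "(\<And>i j. B i j \<in> carrier R) \<Longrightarrow> mat_mult R (mat_one R) B = B"
  by (intro ext, subst mat_mult_row_diag) (auto simp: mat_one_def)

lemma mat_mult_one_right: "finitary R A \<Longrightarrow> mat_mult R A (mat_one R) = A"
  by (intro ext, subst mat_mult_col_diag) (auto simp: mat_one_def finitary_closed)

lemma finitary_mat_mult:
  assumes A: "finitary R A" and B: "finitary R B"
  shows "finitary R (mat_mult R A B)"
proof -
  let ?DA = "{(i,j). A i j \<noteq> mat_one R i j}" and ?DB = "{(i,j). B i j \<noteq> mat_one R i j}"
  have fin: "finite ?DA" "finite ?DB" using A B by (auto simp: finitary_def)
  have "(i,j) \<in> ?DA \<union> ?DB"
    if ne: "mat_mult R A B i j \<noteq> mat_one R i j" and nin: "(i, j) \<notin> fst ` ?DA \<times> snd ` ?DB" for i j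
  proof (cases "i \<in> fst ` ?DA")
    case False
    then have "A i k = mat_one R i k" for k by (force simp: image_iff)
    then have "mat_mult R A B i j = B i j"
      by (subst mat_mult_row_diag) (use B in \<open>auto simp: mat_one_def finitary_closed\<close>)
    then show ?thesis using ne by auto
  next
    case True
    then have "B k j = mat_one R k j" for k using nin by (force simp: image_iff)
    then have "mat_mult R A B i j = A i j"
      by (subst mat_mult_col_diag[OF A]) (auto simp: mat_one_def finitary_closed A)
    then show ?thesis using ne by auto
  qed
  then have "{(i,j). mat_mult R A B i j \<noteq> mat_one R i j} \<subseteq> ?DA \<union> ?DB \<union> (fst ` ?DA \<times> snd ` ?DB)"
    by blast
  moreover have "finite (?DA \<union> ?DB \<union> (fst ` ?DA \<times> snd ` ?DB))" using fin by auto
  ultimately show ?thesis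
    using finite_subset mat_mult_closed[OF A] finitary_closed[OF B] by (auto simp: finitary_def)
qed

lemma mat_mult_assoc:
  assumes A: "finitary R A" and B: "finitary R B" and C: "finitary R C"
  shows "mat_mult R (mat_mult R A B) C = mat_mult R A (mat_mult R B C)"
proof (intro ext)
  fix i j
  define L where "L = {l. A i l \<noteq> \<zero>}"
  define K where "K = (\<Union>l\<in>L. {k. B l k \<noteq> \<zero>}) \<union> {k. mat_mult R A B i k \<noteq> \<zero>}"
  have finL: "finite L" unfolding L_def using finitary_row_finite[OF A] .
  have finK: "finite K"
    unfolding K_def using finL finitary_row_finite[OF B] finitary_row_finite[OF finitary_mat_mult[OF A B]]
    by auto
  note cA = finitary_closed[OF A] and cB = finitary_closed[OF B] and cC = finitary_closed[OF C]
  have AB: "mat_mult R A B i k = (\<Oplus>l\<in>L. A i l \<otimes> B l k)" for k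
    by (rule mat_mult_eq_finsum) (use finL cA cB in \<open>auto simp: L_def\<close>)
  have BC: "mat_mult R B C l j = (\<Oplus>k\<in>K. B l k \<otimes> C k j)" if "l \<in> L" for l
    by (rule mat_mult_eq_finsum) (use finK cB cC that in \<open>auto simp: K_def\<close>)
  have "mat_mult R (mat_mult R A B) C i j = (\<Oplus>k\<in>K. (\<Oplus>l\<in>L. A i l \<otimes> B l k) \<otimes> C k j)"
    unfolding AB[symmetric]
    by (rule mat_mult_eq_finsum) (use finK cC mat_mult_closed[OF A] cB in \<open>auto simp: K_def\<close>)
  also have "\<dots> = (\<Oplus>k\<in>K. \<Oplus>l\<in>L. A i l \<otimes> B l k \<otimes> C k j)"
    by (intro finsum_cong refl) (use finL cA cB cC in \<open>auto simp: finsum_ldistr intro!: finsum_closed\<close>)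
  also have "\<dots> = (\<Oplus>l\<in>L. \<Oplus>k\<in>K. A i l \<otimes> B l k \<otimes> C k j)"
    using finL finK cA cB cC by (intro finsum_swap) auto
  also have "\<dots> = (\<Oplus>l\<in>L. A i l \<otimes> mat_mult R B C l j)"
    by (intro finsum_cong refl) (use BC finK cA cB cC in \<open>auto simp: finsum_rdistr m_assoc intro!: finsum_closed\<close>)
  also have "\<dots> = mat_mult R A (mat_mult R B C) i j"
    by (rule mat_mult_eq_finsum[symmetric]) (use finL cA mat_mult_closed[OF B] cC in \<open>auto simp: L_def\<close>)
  finally show "mat_mult R (mat_mult R A B) C i j = mat_mult R A (mat_mult R B C) i j" .
qed

lemma monoid_mat_monoid: "monoid (mat_monoid R)"
  by (rule monoidI)
    (auto simp: mat_monoid_def finitary_mat_mult mat_mult_assoc mat_mult_one_left mat_mult_one_right finitary_closed)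

lemma group_GL: "group (GL R)"
  unfolding GL_eq_units_of by (rule monoid.units_group[OF monoid_mat_monoid])

lemma finitary_GL: "A \<in> carrier (GL R) \<Longrightarrow> finitary R A"
  by (simp add: GL_def)

lemma elem_mat_apply: "elem_mat R i j r l m = (if l = i \<and> m = j then r else mat_one R l m)"
  by (simp add: elem_mat_def)

lemma finitary_elem_mat: "r \<in> carrier R \<Longrightarrow> finitary R (elem_mat R i j r)"
proof -
  assume r: "r \<in> carrier R"
  have "{(l,m). elem_mat R i j r l m \<noteq> mat_one R l m} \<subseteq> {(i,j)}" by (auto simp: elem_mat_apply)
  then have "finite {(l,m). elem_mat R i j r l m \<noteq> mat_one R l m}" by (rule finite_subset) simp
  then show ?thesis using r by (simp add: finitary_def elem_mat_apply)
qed

lemma elem_mat_mult: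
  assumes ij: "i \<noteq> j" and r: "r \<in> carrier R" and B: "\<And>l m. B l m \<in> carrier R"
  shows "mat_mult R (elem_mat R i j r) B = B(i := (\<lambda>m. B i m \<oplus> r \<otimes> B j m))"
proof (intro ext)
  fix l m
  show "mat_mult R (elem_mat R i j r) B l m = (B(i := (\<lambda>m. B i m \<oplus> r \<otimes> B j m))) l m"
  proof (cases "l = i")
    case False
    then have "mat_mult R (elem_mat R i j r) B l m = elem_mat R i j r l l \<otimes> B l m"
      by (intro mat_mult_row_diag) (use B in \<open>auto simp: elem_mat_apply mat_one_def\<close>)
    then show ?thesis using False B by (simp add: elem_mat_apply mat_one_def)
  next
    case True
    then have "mat_mult R (elem_mat R i j r) B l m = (\<Oplus>k\<in>{i,j}. elem_mat R i j r l k \<otimes> B k m)"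
      by (intro mat_mult_eq_finsum) (use B r in \<open>auto simp: elem_mat_apply mat_one_def\<close>)
    then show ?thesis using True ij r B by (simp add: elem_mat_apply mat_one_def finsum_insert)
  qed
qed

lemma elem_mat_add:
  assumes ij: "i \<noteq> j" and r: "r \<in> carrier R" and s: "s \<in> carrier R"
  shows "mat_mult R (elem_mat R i j r) (elem_mat R i j s) = elem_mat R i j (r \<oplus> s)"
  using ij r s finitary_closed[OF finitary_elem_mat[OF s]]
  by (auto simp: elem_mat_mult elem_mat_apply mat_one_def a_comm intro!: ext)

lemma elem_mat_zero: "i \<noteq> j \<Longrightarrow> elem_mat R i j \<zero> = mat_one R"
  by (auto simp: elem_mat_apply mat_one_def intro!: ext)

lemma elem_mat_GL: "i \<noteq> j \<Longrightarrow> r \<in> carrier R \<Longrightarrow> elem_mat R i j r \<in> carrier (GL R)"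
  by (auto simp: GL_carrier finitary_elem_mat elem_mat_add elem_mat_zero r_neg l_neg
      intro!: exI[of _ "elem_mat R i j (\<ominus> r)"])

lemma inv_elem_mat: "i \<noteq> j \<Longrightarrow> r \<in> carrier R \<Longrightarrow> inv\<^bsub>GL R\<^esub> (elem_mat R i j r) = elem_mat R i j (\<ominus> r)"
  using group.inv_equality[OF group_GL, of "elem_mat R i j (\<ominus> r)" "elem_mat R i j r"]
  by (simp add: elem_mat_add elem_mat_zero elem_mat_GL r_neg l_neg)

lemma elem_mats_GL: "{elem_mat R i j r | i j r. i \<noteq> j \<and> r \<in> carrier R} \<subseteq> carrier (GL R)"
  using elem_mat_GL by blast

lemma subgroup_EL: "subgroup (EL R) (GL R)"
  unfolding EL_def by (rule group.generate_is_subgroup[OF group_GL elem_mats_GL])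

lemma EL_GL: "E \<in> EL R \<Longrightarrow> E \<in> carrier (GL R)"
  using subgroup.subset[OF subgroup_EL] by blast

lemma elem_mat_EL: "i \<noteq> j \<Longrightarrow> r \<in> carrier R \<Longrightarrow> elem_mat R i j r \<in> EL R"
  unfolding EL_def by (rule generate.incl) blast

lemma mat_mult_EL: "E \<in> EL R \<Longrightarrow> F \<in> EL R \<Longrightarrow> mat_mult R E F \<in> EL R"
  using subgroup.m_closed[OF subgroup_EL] by fastforce

lemma embed1_apply: "embed1 R u l m = (if l \<noteq> m then \<zero> else if l = 0 then u else \<one>)"
  by (simp add: embed1_def mat_one_def)

lemma finitary_embed1: "u \<in> carrier R \<Longrightarrow> finitary R (embed1 R u)"
proof -
  assume u: "u \<in> carrier R"
  have "{(l,m). embed1 R u l m \<noteq> mat_one R l m} \<subseteq> {(0,0)}" by (auto simp: embed1_apply mat_one_def)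
  then have "finite {(l,m). embed1 R u l m \<noteq> mat_one R l m}" by (rule finite_subset) simp
  then show ?thesis using u by (simp add: finitary_def embed1_apply)
qed

lemma embed1_mult_left:
  "u \<in> carrier R \<Longrightarrow> (\<And>l m. B l m \<in> carrier R) \<Longrightarrow>
    mat_mult R (embed1 R u) B l m = (if l = 0 then u \<otimes> B l m else B l m)"
  by (subst mat_mult_row_diag) (auto simp: embed1_apply)

lemma embed1_mult_right:
  "u \<in> carrier R \<Longrightarrow> finitary R A \<Longrightarrow>
    mat_mult R A (embed1 R u) l m = (if m = 0 then A l m \<otimes> u else A l m)"
  by (subst mat_mult_col_diag) (auto simp: embed1_apply finitary_closed)

lemma embed1_mult: "u \<in> carrier R \<Longrightarrow> v \<in> carrier R \<Longrightarrow>
    mat_mult R (embed1 R u) (embed1 R v) = embed1 R (u \<otimes> v)"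
  by (intro ext) (auto simp: embed1_mult_left embed1_apply)

lemma embed1_one: "embed1 R \<one> = mat_one R"
  by (intro ext) (simp add: embed1_apply mat_one_def)

lemma embed1_GL: "u \<in> Units R \<Longrightarrow> embed1 R u \<in> carrier (GL R)"
  by (auto simp: GL_carrier finitary_embed1 embed1_mult embed1_one Units_closed
      intro!: exI[of _ "embed1 R (inv u)"])

lemma inv_embed1: "u \<in> Units R \<Longrightarrow> inv\<^bsub>GL R\<^esub> (embed1 R u) = embed1 R (inv u)"
  using group.inv_equality[OF group_GL, of "embed1 R (inv u)" "embed1 R u"]
  by (simp add: embed1_mult embed1_one embed1_GL Units_closed)

lemma conj_elem_mat:
  assumes u: "u \<in> Units R" and ij: "i \<noteq> j" and r: "r \<in> carrier R"
  shows "mat_mult R (mat_mult R (embed1 R u) (elem_mat R i j r)) (embed1 R (inv u)) =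
         elem_mat R i j ((if i = 0 then u else \<one>) \<otimes> r \<otimes> (if j = 0 then inv u else \<one>))"
proof (intro ext)
  fix l m
  have uc: "u \<in> carrier R" "inv u \<in> carrier R" using u by auto
  have f: "finitary R (mat_mult R (embed1 R u) (elem_mat R i j r))"
    by (intro finitary_mat_mult finitary_embed1 finitary_elem_mat uc r)
  show "mat_mult R (mat_mult R (embed1 R u) (elem_mat R i j r)) (embed1 R (inv u)) l m =
         elem_mat R i j ((if i = 0 then u else \<one>) \<otimes> r \<otimes> (if j = 0 then inv u else \<one>)) l m"
    using uc ij r finitary_closed[OF finitary_elem_mat[OF r]]
    by (simp add: embed1_mult_right[OF uc(2) f] embed1_mult_left[OF uc(1)] elem_mat_apply mat_one_def u)
      (use ij in blast)
qed

lemma EL_conj_embed1: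
  assumes u: "u \<in> Units R" and E: "E \<in> EL R"
  shows "mat_mult R (mat_mult R (embed1 R u) E) (embed1 R (inv u)) \<in> EL R"
proof -
  interpret GL: group "GL R" by (rule group_GL)
  have "embed1 R u \<otimes>\<^bsub>GL R\<^esub> E \<otimes>\<^bsub>GL R\<^esub> inv\<^bsub>GL R\<^esub> (embed1 R u) \<in> EL R"
    unfolding EL_def
  proof (rule GL.generate_conj_closed[OF embed1_GL[OF u] elem_mats_GL])
    fix s assume "s \<in> {elem_mat R i j r | i j r. i \<noteq> j \<and> r \<in> carrier R}"
    then obtain i j r where "s = elem_mat R i j r" "i \<noteq> j" "r \<in> carrier R" by blast
    then show "embed1 R u \<otimes>\<^bsub>GL R\<^esub> s \<otimes>\<^bsub>GL R\<^esub> inv\<^bsub>GL R\<^esub> (embed1 R u)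
        \<in> generate (GL R) {elem_mat R i j r | i j r. i \<noteq> j \<and> r \<in> carrier R}"
      using conj_elem_mat[OF u] elem_mat_EL[unfolded EL_def] u
      by (simp add: inv_embed1 Units_closed)
  qed (use E in \<open>simp add: EL_def\<close>)
  then show ?thesis using u by (simp add: inv_embed1)
qed

definition block2 :: "'a \<Rightarrow> 'a \<Rightarrow> 'a \<Rightarrow> 'a \<Rightarrow> nat \<Rightarrow> nat \<Rightarrow> 'a" where
  "block2 a b c d l m = (if l = 0 \<and> m = 0 then a else if l = 0 \<and> m = 1 then b else
      if l = 1 \<and> m = 0 then c else if l = 1 \<and> m = 1 then d else mat_one R l m)"

lemma block2_mult:
  assumes "a \<in> carrier R" "b \<in> carrier R" "c \<in> carrier R" "d \<in> carrier R"
    "a' \<in> carrier R" "b' \<in> carrier R" "c' \<in> carrier R" "d' \<in> carrier R"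
  shows "mat_mult R (block2 a b c d) (block2 a' b' c' d') =
     block2 (a \<otimes> a' \<oplus> b \<otimes> c') (a \<otimes> b' \<oplus> b \<otimes> d') (c \<otimes> a' \<oplus> d \<otimes> c') (c \<otimes> b' \<oplus> d \<otimes> d')"
proof (intro ext)
  fix l m
  have cB: "block2 a' b' c' d' k m \<in> carrier R" and cA: "block2 a b c d l k \<in> carrier R" for k m
    using assms by (simp_all add: block2_def)
  show "mat_mult R (block2 a b c d) (block2 a' b' c' d') l m =
     block2 (a \<otimes> a' \<oplus> b \<otimes> c') (a \<otimes> b' \<oplus> b \<otimes> d') (c \<otimes> a' \<oplus> d \<otimes> c') (c \<otimes> b' \<oplus> d \<otimes> d') l m"
  proof (cases "l < 2")
    case False
    then have "mat_mult R (block2 a b c d) (block2 a' b' c' d') l m = block2 a b c d l l \<otimes> block2 a' b' c' d' l m"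
      by (intro mat_mult_row_diag) (use cB in \<open>auto simp: block2_def mat_one_def\<close>)
    then show ?thesis using False cB by (simp add: block2_def mat_one_def)
  next
    case True
    have "mat_mult R (block2 a b c d) (block2 a' b' c' d') l m
        = (\<Oplus>k\<in>{0,1}. block2 a b c d l k \<otimes> block2 a' b' c' d' k m)"
      by (intro mat_mult_eq_finsum) (use True cA cB in \<open>auto simp: block2_def mat_one_def\<close>)
    also have "\<dots> = block2 a b c d l 0 \<otimes> block2 a' b' c' d' 0 m \<oplus> block2 a b c d l 1 \<otimes> block2 a' b' c' d' 1 m"
      using cA cB by (simp add: finsum_insert)
    finally show ?thesis
      using True assms by (cases "m < 2") (auto simp: block2_def mat_one_def less_2_cases_iff)
  qed
qed

lemma elem_mat_01_block2: "elem_mat R 0 1 r = block2 \<one> r \<zero> \<one>"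
  by (intro ext) (auto simp: elem_mat_apply block2_def mat_one_def)

lemma elem_mat_10_block2: "elem_mat R 1 0 r = block2 \<one> \<zero> r \<one>"
  by (intro ext) (auto simp: elem_mat_apply block2_def mat_one_def)

lemma embed1_block2: "embed1 R u = block2 u \<zero> \<zero> \<one>"
  by (intro ext) (auto simp: embed1_apply block2_def mat_one_def)

lemma block2_diag_EL:
  assumes w: "w \<in> carrier R" "w' \<in> carrier R" and ww: "w \<otimes> w' = \<one>" "w' \<otimes> w = \<one>"
  shows "block2 w \<zero> \<zero> w' \<in> EL R"
proof -
  have "mat_mult R (mat_mult R (elem_mat R 0 1 w) (elem_mat R 1 0 (\<ominus> w'))) (elem_mat R 0 1 w)
      = block2 \<zero> w (\<ominus> w') \<zero>"
    unfolding elem_mat_01_block2 elem_mat_10_block2 using w ww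
    by (simp add: block2_mult r_minus l_minus r_neg l_neg)
  then have "block2 \<zero> w (\<ominus> w') \<zero> \<in> EL R"
    using w by (metis mat_mult_EL elem_mat_EL a_inv_closed zero_neq_one one_neq_zero)
  moreover have "mat_mult R (mat_mult R (elem_mat R 0 1 (\<ominus> \<one>)) (elem_mat R 1 0 \<one>)) (elem_mat R 0 1 (\<ominus> \<one>))
      = block2 \<zero> (\<ominus> \<one>) \<one> \<zero>"
    unfolding elem_mat_01_block2 elem_mat_10_block2 by (simp add: block2_mult r_minus l_minus r_neg l_neg)
  then have "block2 \<zero> (\<ominus> \<one>) \<one> \<zero> \<in> EL R"
    by (metis mat_mult_EL elem_mat_EL a_inv_closed one_closed zero_neq_one one_neq_zero)
  moreover have "mat_mult R (block2 \<zero> w (\<ominus> w') \<zero>) (block2 \<zero> (\<ominus> \<one>) \<one> \<zero>) = block2 w \<zero> \<zero> w'"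
    using w by (simp add: block2_mult r_minus l_minus minus_minus)
  ultimately show ?thesis using mat_mult_EL by metis
qed

text \<open>Whitehead's trick: \<open>diag(u v u\<inverse> v\<inverse>, 1)\<close> is the product of
  \<open>diag(u, u\<inverse>)\<close>, \<open>diag(v, v\<inverse>)\<close> and \<open>diag(u\<inverse> v\<inverse>, v u)\<close>.\<close>

lemma embed1_commutator_EL:
  assumes u: "u \<in> Units R" and v: "v \<in> Units R"
  shows "embed1 R (u \<otimes> v \<otimes> inv u \<otimes> inv v) \<in> EL R"
proof -
  have c: "u \<in> carrier R" "inv u \<in> carrier R" "v \<in> carrier R" "inv v \<in> carrier R" using u v by auto
  have inv_pair: "(inv u \<otimes> inv v) \<otimes> (v \<otimes> u) = \<one>" "(v \<otimes> u) \<otimes> (inv u \<otimes> inv v) = \<one>"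
    using u v c by (simp_all add: m_assoc)
  have "mat_mult R (mat_mult R (block2 u \<zero> \<zero> (inv u)) (block2 v \<zero> \<zero> (inv v)))
          (block2 (inv u \<otimes> inv v) \<zero> \<zero> (v \<otimes> u))
     = block2 (u \<otimes> v \<otimes> (inv u \<otimes> inv v)) \<zero> \<zero> (inv u \<otimes> inv v \<otimes> (v \<otimes> u))"
    using c by (simp add: block2_mult)
  also have "\<dots> = embed1 R (u \<otimes> v \<otimes> inv u \<otimes> inv v)"
    using c inv_pair by (simp add: embed1_block2 m_assoc)
  finally show ?thesis
    using block2_diag_EL[of u "inv u"] block2_diag_EL[of v "inv v"]
      block2_diag_EL[OF _ _ inv_pair] u v c mat_mult_EL by (metis Units_l_inv Units_r_inv m_closed)
qed

lemma subgroup_EL_units: "subgroup (EL R) (units_of (mat_monoid R))"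
  using subgroup_EL by (simp add: GL_eq_units_of)

lemma r_coset_GL: "r_coset (GL R) = r_coset (mat_monoid R)"
  and set_mult_GL: "set_mult (GL R) = set_mult (mat_monoid R)"
  by (simp_all add: GL_eq_units_of)

lemma mat_monoid_simps [simp]:
  "carrier (mat_monoid R) = {A. finitary R A}" "monoid.mult (mat_monoid R) = mat_mult R"
  "one (mat_monoid R) = mat_one R"
  by (simp_all add: mat_monoid_def)

lemma embed1_Units_mat_monoid: "u \<in> Units R \<Longrightarrow> embed1 R u \<in> Units (mat_monoid R)"
  using embed1_GL by (simp add: GL_eq_units_of units_of_carrier)

lemma inv_mat_monoid_embed1: "u \<in> Units R \<Longrightarrow> inv\<^bsub>mat_monoid R\<^esub> (embed1 R u) = embed1 R (inv u)"
  using inv_embed1 monoid.units_of_inv[OF monoid_mat_monoid embed1_Units_mat_monoid]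
  by (simp add: GL_eq_units_of)

lemma EL_rcos_eq_imp:
  "finitary R X \<Longrightarrow> EL R #>\<^bsub>GL R\<^esub> X = EL R #>\<^bsub>GL R\<^esub> Z \<Longrightarrow> \<exists>E\<in>EL R. X = mat_mult R E Z"
  using monoid.rcos_units_self[OF monoid_mat_monoid subgroup_EL_units, of X]
  by (auto simp: r_coset_GL r_coset_def)

lemma EL_rcos_mult_EL: "E \<in> EL R \<Longrightarrow> finitary R Z \<Longrightarrow> EL R #>\<^bsub>GL R\<^esub> (mat_mult R E Z) = EL R #>\<^bsub>GL R\<^esub> Z"
  using monoid.rcos_units_mult_mem[OF monoid_mat_monoid subgroup_EL_units] by (simp add: r_coset_GL)

lemma EL_set_mult_rcos: "finitary R Z \<Longrightarrow> EL R <#>\<^bsub>GL R\<^esub> (EL R #>\<^bsub>GL R\<^esub> Z) = EL R #>\<^bsub>GL R\<^esub> Z"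
  using monoid.set_mult_rcos_units[OF monoid_mat_monoid subgroup_EL_units]
  by (simp add: r_coset_GL set_mult_GL)

lemma k1_class_mult:
  assumes u: "u \<in> Units R" and B: "finitary R B"
  shows "k1_class R u <#>\<^bsub>GL R\<^esub> (EL R #>\<^bsub>GL R\<^esub> B) = EL R #>\<^bsub>GL R\<^esub> mat_mult R (embed1 R u) B"
  using monoid.rcos_mult_rcos_units[OF monoid_mat_monoid subgroup_EL_units embed1_Units_mat_monoid[OF u]]
    EL_conj_embed1[OF u] B u
  by (simp add: k1_class_def r_coset_GL set_mult_GL inv_mat_monoid_embed1)

lemma inv_K1_k1_class:
  assumes u: "u \<in> Units R"
  shows "inv\<^bsub>K1 R\<^esub> (k1_class R u) = k1_class R (inv u)"
proof -
  have "inv\<^bsub>units_of (mat_monoid R) Mod EL R\<^esub> (EL R #>\<^bsub>mat_monoid R\<^esub> embed1 R u)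
      = EL R #>\<^bsub>mat_monoid R\<^esub> embed1 R (inv u)"
    using monoid.inv_units_Mod_rcos[OF monoid_mat_monoid subgroup_EL_units embed1_Units_mat_monoid[OF u]]
      EL_conj_embed1[OF u] EL_conj_embed1[OF Units_inv_Units[OF u]] u
    by (simp add: inv_mat_monoid_embed1)
  then show ?thesis by (simp add: K1_def k1_class_def GL_eq_units_of)
qed

text \<open>A ring map \<open>h\<close> into a commutative ring gives determinants of upper-left blocks;
  multiplying by an elementary matrix with indices below \<open>n\<close> is a row operation on the
  \<open>n \<times> n\<close> block, so for large \<open>n\<close> this determinant is an invariant of the \<open>EL\<close>-coset.\<close>

definition identity_beyond :: "nat \<Rightarrow> (nat \<Rightarrow> nat \<Rightarrow> 'a) \<Rightarrow> bool" where
  "identity_beyond n M \<longleftrightarrow> (\<forall>l m. n \<le> l \<or> n \<le> m \<longrightarrow> M l m = mat_one R l m)"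

lemma identity_beyond_elem_mat_mult:
  assumes ij: "i \<noteq> j" and r: "r \<in> carrier R" and n: "i < n" "j < n"
    and M: "finitary R M" and bM: "identity_beyond n M"
  shows "identity_beyond n (mat_mult R (elem_mat R i j r) M)"
  using bM n r finitary_closed[OF M]
  by (force simp: identity_beyond_def elem_mat_mult[OF ij r] mat_one_def)

lemma detn_hom_elem_mat_mult:
  assumes S: "cring S" and h: "h \<in> ring_hom R S"
    and ij: "i \<noteq> j" and r: "r \<in> carrier R" and n: "i < n" "j < n" and M: "finitary R M"
  shows "cring.detn S n (\<lambda>l m. h (mat_mult R (elem_mat R i j r) M l m)) = cring.detn S n (\<lambda>l m. h (M l m))"
proof -
  interpret S: cring S by (rule S)
  note cM = finitary_closed[OF M]
  have hM: "h (M l m) \<in> carrier S" for l m using ring_hom_closed[OF h cM] .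
  have "(\<lambda>l m. h (mat_mult R (elem_mat R i j r) M l m))
      = (\<lambda>l m. h (M l m))(i := (\<lambda>m. h (M i m) \<oplus>\<^bsub>S\<^esub> h r \<otimes>\<^bsub>S\<^esub> h (M j m)))"
    using h r cM by (auto simp: elem_mat_mult[OF ij r] ring_hom_add ring_hom_mult intro!: ext)
  then show ?thesis
    using S.detn_add_row_multiple[OF ij n, of "\<lambda>l m. h (M l m)" "h r"] hM ring_hom_closed[OF h r]
    by simp
qed

lemma EL_preserves_detn_hom:
  assumes S: "cring S" and h: "h \<in> ring_hom R S" and E: "E \<in> EL R"
  shows "\<exists>N. \<forall>n\<ge>N. \<forall>M. finitary R M \<longrightarrow> identity_beyond n M \<longrightarrow>
    identity_beyond n (mat_mult R E M) \<and>
    cring.detn S n (\<lambda>l m. h (mat_mult R E M l m)) = cring.detn S n (\<lambda>l m. h (M l m))"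
  using E unfolding EL_def
proof (induction E rule: generate.induct)
  case one
  show ?case by (auto simp: mat_mult_one_left finitary_closed)
next
  case (incl E)
  then obtain i j r where "E = elem_mat R i j r" "i \<noteq> j" "r \<in> carrier R" by blast
  then show ?case
    using identity_beyond_elem_mat_mult detn_hom_elem_mat_mult[OF S h] by (intro exI[of _ "Suc (max i j)"]) auto
next
  case (inv E)
  then obtain i j r where "E = elem_mat R i j r" "i \<noteq> j" "r \<in> carrier R" by blast
  then show ?case
    using identity_beyond_elem_mat_mult detn_hom_elem_mat_mult[OF S h] inv_elem_mat
    by (intro exI[of _ "Suc (max i j)"]) auto
next
  case (eng E F)
  from eng.IH obtain N1 N2 where
    N1: "\<forall>n\<ge>N1. \<forall>M. finitary R M \<longrightarrow> identity_beyond n M \<longrightarrow> identity_beyond n (mat_mult R E M) \<and>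
      cring.detn S n (\<lambda>l m. h (mat_mult R E M l m)) = cring.detn S n (\<lambda>l m. h (M l m))" and
    N2: "\<forall>n\<ge>N2. \<forall>M. finitary R M \<longrightarrow> identity_beyond n M \<longrightarrow> identity_beyond n (mat_mult R F M) \<and>
      cring.detn S n (\<lambda>l m. h (mat_mult R F M l m)) = cring.detn S n (\<lambda>l m. h (M l m))"
    by blast
  have "finitary R E" "finitary R F" using eng.hyps EL_GL finitary_GL unfolding EL_def by auto
  then have "mat_mult R (E \<otimes>\<^bsub>GL R\<^esub> F) M = mat_mult R E (mat_mult R F M)" if "finitary R M" for M
    using that by (simp add: mat_mult_assoc)
  then show ?case
    using N1 N2 finitary_mat_mult \<open>finitary R F\<close> by (intro exI[of _ "max N1 N2"]) auto
qed

lemma detn_hom_embed1: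
  assumes S: "cring S" and h: "h \<in> ring_hom R S" and u: "u \<in> carrier R" and n: "1 \<le> n"
  shows "cring.detn S n (\<lambda>l m. h (embed1 R u l m)) = h u"
proof -
  interpret S: cring S by (rule S)
  have c: "h (embed1 R u l m) \<in> carrier S" for l m
    using ring_hom_closed[OF h finitary_closed[OF finitary_embed1[OF u]]] .
  have "cring.detn S n (\<lambda>l m. h (embed1 R u l m)) = (\<Otimes>\<^bsub>S\<^esub>l\<in>{..<n}. h (embed1 R u l l))"
    using c ring_hom_zero[OF h ring_axioms S.ring_axioms] by (intro S.detn_diagonal) (auto simp: embed1_apply)
  also have "\<dots> = h (embed1 R u 0 0) \<otimes>\<^bsub>S\<^esub> (\<Otimes>\<^bsub>S\<^esub>l\<in>{..<n} - {0}. h (embed1 R u l l))"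
    by (rule S.finprod_remove) (use n c in auto)
  also have "(\<Otimes>\<^bsub>S\<^esub>l\<in>{..<n} - {0}. h (embed1 R u l l)) = \<one>\<^bsub>S\<^esub>"
    by (rule S.finprod_one_eqI) (simp add: embed1_apply ring_hom_one[OF h])
  finally show ?thesis using ring_hom_closed[OF h u] by (simp add: embed1_apply)
qed

lemma ring_hom_eq_if_embed1_EL:
  assumes S: "cring S" and h: "h \<in> ring_hom R S" and E: "E \<in> EL R"
    and u: "u \<in> carrier R" and v: "v \<in> carrier R" and uv: "embed1 R u = mat_mult R E (embed1 R v)"
  shows "h u = h v"
proof -
  obtain N where N: "\<forall>n\<ge>N. \<forall>M. finitary R M \<longrightarrow> identity_beyond n M \<longrightarrow>
      cring.detn S n (\<lambda>l m. h (mat_mult R E M l m)) = cring.detn S n (\<lambda>l m. h (M l m))"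
    using EL_preserves_detn_hom[OF S h E] by blast
  define n where "n = max N 1"
  have "identity_beyond n (embed1 R v)"
    unfolding identity_beyond_def n_def by (auto simp: embed1_apply mat_one_def)
  then have "cring.detn S n (\<lambda>l m. h (embed1 R u l m)) = cring.detn S n (\<lambda>l m. h (embed1 R v l m))"
    using N finitary_embed1[OF v] uv by (simp add: n_def)
  then show ?thesis using detn_hom_embed1[OF S h] u v by (simp add: n_def)
qed

end

section \<open>Novikov rings\<close>

definition monom :: "int \<Rightarrow> 'a \<Rightarrow> 'a \<Rightarrow> int" where
  "monom s x = (\<lambda>g. if g = x then s else 0)"

locale novikov = group G for G (structure) +
  fixes \<xi> :: "'a \<Rightarrow> real"
  assumes xi_mult: "x \<in> carrier G \<Longrightarrow> y \<in> carrier G \<Longrightarrow> \<xi> (x \<otimes> y) = \<xi> x + \<xi> y"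
begin

abbreviation "NC \<equiv> nov_carrier G \<xi>"
abbreviation "Nov \<equiv> novikov_ring G \<xi>"

lemma xi_one [simp]: "\<xi> \<one> = 0"
  using xi_mult[of \<one> \<one>] by simp

lemma xi_inv [simp]: "x \<in> carrier G \<Longrightarrow> \<xi> (inv x) = - \<xi> x"
  using xi_mult[of x "inv x"] by simp

lemma xi_inv_mult: "x \<in> carrier G \<Longrightarrow> y \<in> carrier G \<Longrightarrow> \<xi> (inv x \<otimes> y) = \<xi> y - \<xi> x"
  by (simp add: xi_mult)

lemma NC_outside: "f \<in> NC \<Longrightarrow> g \<notin> carrier G \<Longrightarrow> f g = 0"
  by (simp add: nov_carrier_def)

lemma NC_nonzero_carrier: "f \<in> NC \<Longrightarrow> f g \<noteq> 0 \<Longrightarrow> g \<in> carrier G"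
  using NC_outside by blast

lemma NC_finite_above: "f \<in> NC \<Longrightarrow> finite {g. r \<le> \<xi> g \<and> f g \<noteq> 0}"
proof -
  assume f: "f \<in> NC"
  have "{g. r \<le> \<xi> g \<and> f g \<noteq> 0} = {g \<in> carrier G. \<xi> g \<ge> r \<and> f g \<noteq> 0}"
    using NC_nonzero_carrier[OF f] by auto
  then show ?thesis using f by (simp add: nov_carrier_def)
qed

lemma NC_bounded_above: "f \<in> NC \<Longrightarrow> \<exists>M. \<forall>g. f g \<noteq> 0 \<longrightarrow> \<xi> g \<le> M"
proof (cases "\<exists>g0. f g0 \<noteq> 0")
  case True
  assume f: "f \<in> NC"
  then obtain g0 where g0: "f g0 \<noteq> 0" using True by auto
  let ?S = "{g. \<xi> g0 \<le> \<xi> g \<and> f g \<noteq> 0}"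
  have fin: "finite ?S" using NC_finite_above[OF f] .
  have "\<xi> g \<le> Max (\<xi> ` ?S)" if "f g \<noteq> 0" for g
  proof (cases "\<xi> g0 \<le> \<xi> g")
    case True
    then show ?thesis using that fin by (simp add: Max_ge)
  next
    case False
    have "\<xi> g0 \<le> Max (\<xi> ` ?S)" using fin g0 by (simp add: Max_ge)
    then show ?thesis using False by linarith
  qed
  then show ?thesis by blast
qed auto

lemma carrier_Nov [simp]: "carrier Nov = NC"
  and mult_Nov [simp]: "monoid.mult Nov = nov_mult G"
  and one_Nov: "one Nov = monom 1 \<one>"
  and zero_Nov [simp]: "zero Nov = (\<lambda>_. 0)"
  and add_Nov [simp]: "add Nov = (\<lambda>f h g. f g + h g)"
  by (simp_all add: novikov_ring_def monom_def)

lemma monom_NC: "x \<in> carrier G \<Longrightarrow> monom s x \<in> NC"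
proof -
  assume x: "x \<in> carrier G"
  have "finite {g \<in> carrier G. r \<le> \<xi> g \<and> monom s x g \<noteq> 0}" for r
    by (rule finite_subset[of _ "{x}"]) (auto simp: monom_def)
  then show ?thesis using x by (auto simp: nov_carrier_def monom_def)
qed

lemma add_NC: "f \<in> NC \<Longrightarrow> h \<in> NC \<Longrightarrow> (\<lambda>g. f g + h g) \<in> NC"
proof -
  assume f: "f \<in> NC" and h: "h \<in> NC"
  have "finite {g \<in> carrier G. r \<le> \<xi> g \<and> f g + h g \<noteq> 0}" for r
    by (rule finite_subset[of _ "{g. r \<le> \<xi> g \<and> f g \<noteq> 0} \<union> {g. r \<le> \<xi> g \<and> h g \<noteq> 0}"])
      (use NC_finite_above[OF f] NC_finite_above[OF h] in auto)
  then show ?thesis using f h by (auto simp: nov_carrier_def)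
qed

lemma uminus_NC: "f \<in> NC \<Longrightarrow> (\<lambda>g. - f g) \<in> NC"
  by (auto simp: nov_carrier_def)

lemma diff_NC: "f \<in> NC \<Longrightarrow> h \<in> NC \<Longrightarrow> (\<lambda>g. f g - h g) \<in> NC"
  using add_NC[OF _ uminus_NC] by simp

lemma zero_NC: "(\<lambda>_. 0) \<in> NC"
  by (auto simp: nov_carrier_def)

definition conv_support :: "('a \<Rightarrow> int) \<Rightarrow> ('a \<Rightarrow> int) \<Rightarrow> 'a \<Rightarrow> 'a set" where
  "conv_support f h g = {k \<in> carrier G. f k \<noteq> 0 \<and> h (inv k \<otimes> g) \<noteq> 0}"

lemma finite_conv_support:
  assumes f: "f \<in> NC" and h: "h \<in> NC" and g: "g \<in> carrier G"
  shows "finite (conv_support f h g)"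
proof -
  obtain Mh where Mh: "\<And>x. h x \<noteq> 0 \<Longrightarrow> \<xi> x \<le> Mh" using NC_bounded_above[OF h] by blast
  have "conv_support f h g \<subseteq> {k. \<xi> g - Mh \<le> \<xi> k \<and> f k \<noteq> 0}"
    using Mh g by (force simp: conv_support_def xi_inv_mult)
  then show ?thesis using NC_finite_above[OF f] finite_subset by blast
qed

lemma nov_mult_eq_sum:
  assumes f: "f \<in> NC" and g: "g \<in> carrier G" and A: "finite A" and sub: "conv_support f h g \<subseteq> A"
  shows "nov_mult G f h g = (\<Sum>k\<in>A. f k * h (inv k \<otimes> g))"
proof -
  have "nov_mult G f h g = (\<Sum>k\<in>conv_support f h g. f k * h (inv k \<otimes> g))"
    using g by (simp add: nov_mult_def conv_support_def)
  also have "\<dots> = (\<Sum>k\<in>A. f k * h (inv k \<otimes> g))"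
    by (rule sum.mono_neutral_left[OF A sub]) (use NC_nonzero_carrier[OF f] in \<open>auto simp: conv_support_def\<close>)
  finally show ?thesis .
qed

lemma nov_mult_outside: "g \<notin> carrier G \<Longrightarrow> nov_mult G f h g = 0"
  by (simp add: nov_mult_def)

lemma nov_mult_nonzeroE:
  assumes "nov_mult G f h g \<noteq> 0"
  obtains k where "g \<in> carrier G" "k \<in> carrier G" "f k \<noteq> 0" "h (inv k \<otimes> g) \<noteq> 0"
  using assms by (cases "g \<in> carrier G") (auto simp: nov_mult_def intro: sum.neutral)

lemma nov_mult_closed:
  assumes f: "f \<in> NC" and h: "h \<in> NC"
  shows "nov_mult G f h \<in> NC"
proof -
  obtain Mf where Mf: "\<And>x. f x \<noteq> 0 \<Longrightarrow> \<xi> x \<le> Mf" using NC_bounded_above[OF f] by blast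
  obtain Mh where Mh: "\<And>x. h x \<noteq> 0 \<Longrightarrow> \<xi> x \<le> Mh" using NC_bounded_above[OF h] by blast
  have "finite {g \<in> carrier G. r \<le> \<xi> g \<and> nov_mult G f h g \<noteq> 0}" for r
  proof -
    let ?A = "{a. r - Mh \<le> \<xi> a \<and> f a \<noteq> 0}" and ?B = "{b. r - Mf \<le> \<xi> b \<and> h b \<noteq> 0}"
    have "{g \<in> carrier G. r \<le> \<xi> g \<and> nov_mult G f h g \<noteq> 0} \<subseteq> (\<lambda>(a,b). a \<otimes> b) ` (?A \<times> ?B)"
    proof
      fix g assume "g \<in> {g \<in> carrier G. r \<le> \<xi> g \<and> nov_mult G f h g \<noteq> 0}"
      then have g: "g \<in> carrier G" "r \<le> \<xi> g" "nov_mult G f h g \<noteq> 0" by auto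
      obtain k where k: "k \<in> carrier G" "f k \<noteq> 0" "h (inv k \<otimes> g) \<noteq> 0"
        using g(3) by (rule nov_mult_nonzeroE)
      have "k \<in> ?A" "inv k \<otimes> g \<in> ?B"
        using k g(2) Mf[OF k(2)] Mh[OF k(3)] xi_inv_mult[OF k(1) g(1)] by auto
      moreover have "g = k \<otimes> (inv k \<otimes> g)" using k(1) g(1) by (simp add: m_assoc[symmetric])
      ultimately show "g \<in> (\<lambda>(a,b). a \<otimes> b) ` (?A \<times> ?B)" by force
    qed
    moreover have "finite (?A \<times> ?B)" using NC_finite_above[OF f] NC_finite_above[OF h] by blast
    ultimately show ?thesis using finite_subset by blast
  qed
  then show ?thesis by (simp add: nov_carrier_def nov_mult_outside)
qed

lemma nov_mult_inv_mult_eq_sum: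
  assumes h: "h \<in> NC" and a: "a \<in> carrier G" and g: "g \<in> carrier G"
    and C: "finite C" "C \<subseteq> carrier G"
    and cover: "\<And>c. c \<in> carrier G \<Longrightarrow> h (inv a \<otimes> c) \<noteq> 0 \<Longrightarrow> k (inv c \<otimes> g) \<noteq> 0 \<Longrightarrow> c \<in> C"
  shows "nov_mult G h k (inv a \<otimes> g) = (\<Sum>c\<in>C. h (inv a \<otimes> c) * k (inv c \<otimes> g))"
proof -
  have inj: "inj_on (\<lambda>c. inv a \<otimes> c) C"
    using C(2) a by (intro inj_onI) (auto simp: subset_iff)
  have "nov_mult G h k (inv a \<otimes> g) = (\<Sum>b\<in>(\<lambda>c. inv a \<otimes> c) ` C. h b * k (inv b \<otimes> (inv a \<otimes> g)))"
  proof (rule nov_mult_eq_sum[OF h])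
    show "conv_support h k (inv a \<otimes> g) \<subseteq> (\<lambda>c. inv a \<otimes> c) ` C"
    proof
      fix b assume "b \<in> conv_support h k (inv a \<otimes> g)"
      then have b: "b \<in> carrier G" "h b \<noteq> 0" "k (inv b \<otimes> (inv a \<otimes> g)) \<noteq> 0"
        by (auto simp: conv_support_def)
      have "inv (a \<otimes> b) \<otimes> g = inv b \<otimes> (inv a \<otimes> g)" using a b g by (simp add: inv_mult_group m_assoc)
      then have "a \<otimes> b \<in> C" using cover[of "a \<otimes> b"] a b g by (simp add: m_assoc[symmetric])
      moreover have "b = inv a \<otimes> (a \<otimes> b)" using a b by (simp add: m_assoc[symmetric])
      ultimately show "b \<in> (\<lambda>c. inv a \<otimes> c) ` C" by blast
    qed
  qed (use a g C in auto)
  also have "\<dots> = (\<Sum>c\<in>C. h (inv a \<otimes> c) * k (inv (inv a \<otimes> c) \<otimes> (inv a \<otimes> g)))"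
    by (simp add: sum.reindex[OF inj])
  also have "\<dots> = (\<Sum>c\<in>C. h (inv a \<otimes> c) * k (inv c \<otimes> g))"
    using C(2) a g by (intro sum.cong refl) (auto simp: inv_mult_group m_assoc subset_iff)
  finally show ?thesis .
qed

lemma triple_products_window:
  assumes f: "f \<in> NC" and h: "h \<in> NC" and k: "k \<in> NC" and g: "g \<in> carrier G"
  obtains A C where "finite A" "A \<subseteq> carrier G" "\<And>a. a \<in> A \<Longrightarrow> f a \<noteq> 0" "finite C" "C \<subseteq> carrier G"
    "\<And>a c. a \<in> carrier G \<Longrightarrow> c \<in> carrier G \<Longrightarrow> f a \<noteq> 0 \<Longrightarrow> h (inv a \<otimes> c) \<noteq> 0 \<Longrightarrow>
      k (inv c \<otimes> g) \<noteq> 0 \<Longrightarrow> a \<in> A \<and> c \<in> C"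
proof -
  obtain Mf Mh Mk where Mf: "\<And>x. f x \<noteq> 0 \<Longrightarrow> \<xi> x \<le> Mf" and Mh: "\<And>x. h x \<noteq> 0 \<Longrightarrow> \<xi> x \<le> Mh"
    and Mk: "\<And>x. k x \<noteq> 0 \<Longrightarrow> \<xi> x \<le> Mk"
    using NC_bounded_above[OF f] NC_bounded_above[OF h] NC_bounded_above[OF k] by metis
  define A where "A = {a. \<xi> g - Mh - Mk \<le> \<xi> a \<and> f a \<noteq> 0}"
  define C where "C = (\<lambda>(a,b). a \<otimes> b) ` (A \<times> {b. \<xi> g - Mf - Mk \<le> \<xi> b \<and> h b \<noteq> 0})"
  have "finite A" unfolding A_def using NC_finite_above[OF f] .
  moreover have "finite C" unfolding C_def using \<open>finite A\<close> NC_finite_above[OF h] by blast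
  moreover have A: "A \<subseteq> carrier G" unfolding A_def using NC_nonzero_carrier[OF f] by blast
  moreover have "\<And>a. a \<in> A \<Longrightarrow> f a \<noteq> 0" by (simp add: A_def)
  moreover have "C \<subseteq> carrier G" unfolding C_def using A NC_nonzero_carrier[OF h] by auto
  moreover have "a \<in> A \<and> c \<in> C"
    if "a \<in> carrier G" "c \<in> carrier G" "f a \<noteq> 0" "h (inv a \<otimes> c) \<noteq> 0" "k (inv c \<otimes> g) \<noteq> 0" for a c
  proof -
    have "a \<in> A" using that Mh Mk xi_inv_mult g by (force simp: A_def)
    moreover have "c = a \<otimes> (inv a \<otimes> c)" using that(1,2) by (simp add: m_assoc[symmetric])
    moreover have "\<xi> g - Mf - Mk \<le> \<xi> (inv a \<otimes> c)" using that Mf Mk xi_inv_mult g by force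
    ultimately show ?thesis using that(4) unfolding C_def by force
  qed
  ultimately show ?thesis using that by blast
qed

lemma nov_mult_assoc:
  assumes f: "f \<in> NC" and h: "h \<in> NC" and k: "k \<in> NC"
  shows "nov_mult G (nov_mult G f h) k = nov_mult G f (nov_mult G h k)"
proof
  fix g
  show "nov_mult G (nov_mult G f h) k g = nov_mult G f (nov_mult G h k) g"
  proof (cases "g \<in> carrier G")
    case False
    then show ?thesis by (simp add: nov_mult_outside)
  next
    case g: True
    obtain A C where finA: "finite A" and A: "A \<subseteq> carrier G" and fA: "\<And>a. a \<in> A \<Longrightarrow> f a \<noteq> 0"
      and finC: "finite C" and C: "C \<subseteq> carrier G"
      and window: "\<And>a c. a \<in> carrier G \<Longrightarrow> c \<in> carrier G \<Longrightarrow> f a \<noteq> 0 \<Longrightarrow> h (inv a \<otimes> c) \<noteq> 0 \<Longrightarrow>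
        k (inv c \<otimes> g) \<noteq> 0 \<Longrightarrow> a \<in> A \<and> c \<in> C"
      using triple_products_window[OF f h k g] by blast
    note inA = window[THEN conjunct1] and inC = window[THEN conjunct2]
    have "nov_mult G f (nov_mult G h k) g = (\<Sum>a\<in>A. f a * nov_mult G h k (inv a \<otimes> g))"
    proof (rule nov_mult_eq_sum[OF f g finA], rule subsetI)
      fix a assume "a \<in> conv_support f (nov_mult G h k) g"
      then have a: "a \<in> carrier G" "f a \<noteq> 0" "nov_mult G h k (inv a \<otimes> g) \<noteq> 0"
        by (auto simp: conv_support_def)
      obtain b where b: "b \<in> carrier G" "h b \<noteq> 0" "k (inv b \<otimes> (inv a \<otimes> g)) \<noteq> 0"
        using a(3) by (rule nov_mult_nonzeroE)
      have "inv (a \<otimes> b) \<otimes> g = inv b \<otimes> (inv a \<otimes> g)" using a b g by (simp add: inv_mult_group m_assoc)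
      then show "a \<in> A" using inA[of a "a \<otimes> b"] a b g by (simp add: m_assoc[symmetric])
    qed
    also have "\<dots> = (\<Sum>a\<in>A. \<Sum>c\<in>C. f a * h (inv a \<otimes> c) * k (inv c \<otimes> g))"
    proof (intro sum.cong refl)
      fix a assume "a \<in> A"
      then have "nov_mult G h k (inv a \<otimes> g) = (\<Sum>c\<in>C. h (inv a \<otimes> c) * k (inv c \<otimes> g))"
        using A fA inC by (intro nov_mult_inv_mult_eq_sum[OF h _ g finC C]) auto
      then show "f a * nov_mult G h k (inv a \<otimes> g) = (\<Sum>c\<in>C. f a * h (inv a \<otimes> c) * k (inv c \<otimes> g))"
        by (simp add: sum_distrib_left mult.assoc)
    qed
    also have "\<dots> = (\<Sum>c\<in>C. (\<Sum>a\<in>A. f a * h (inv a \<otimes> c)) * k (inv c \<otimes> g))"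
      by (subst sum.swap) (simp add: sum_distrib_right)
    also have "\<dots> = (\<Sum>c\<in>C. nov_mult G f h c * k (inv c \<otimes> g))"
    proof (intro sum.cong refl)
      fix c assume c: "c \<in> C"
      show "(\<Sum>a\<in>A. f a * h (inv a \<otimes> c)) * k (inv c \<otimes> g) = nov_mult G f h c * k (inv c \<otimes> g)"
      proof (cases "k (inv c \<otimes> g) = 0")
        case False
        then have "nov_mult G f h c = (\<Sum>a\<in>A. f a * h (inv a \<otimes> c))"
          using c C inA by (intro nov_mult_eq_sum[OF f _ finA]) (auto simp: conv_support_def)
        then show ?thesis by simp
      qed simp
    qed
    also have "\<dots> = nov_mult G (nov_mult G f h) k g"
    proof (rule nov_mult_eq_sum[OF nov_mult_closed[OF f h] g finC, symmetric], rule subsetI)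
      fix c assume "c \<in> conv_support (nov_mult G f h) k g"
      then have c: "c \<in> carrier G" "nov_mult G f h c \<noteq> 0" "k (inv c \<otimes> g) \<noteq> 0"
        by (auto simp: conv_support_def)
      obtain a where "a \<in> carrier G" "f a \<noteq> 0" "h (inv a \<otimes> c) \<noteq> 0"
        using c(2) by (rule nov_mult_nonzeroE)
      then show "c \<in> C" using inC c by blast
    qed
    finally show ?thesis ..
  qed
qed

lemma nov_mult_add_left:
  assumes f: "f \<in> NC" and h: "h \<in> NC" and k: "k \<in> NC"
  shows "nov_mult G (\<lambda>g. f g + h g) k = (\<lambda>g. nov_mult G f k g + nov_mult G h k g)"
proof
  fix g
  show "nov_mult G (\<lambda>g. f g + h g) k g = nov_mult G f k g + nov_mult G h k g"
  proof (cases "g \<in> carrier G")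
    case g: True
    let ?A = "conv_support f k g \<union> conv_support h k g \<union> conv_support (\<lambda>g. f g + h g) k g"
    have fin: "finite ?A"
      using finite_conv_support[OF f k g] finite_conv_support[OF h k g]
        finite_conv_support[OF add_NC[OF f h] k g] by simp
    have "nov_mult G (\<lambda>g. f g + h g) k g = (\<Sum>a\<in>?A. (f a + h a) * k (inv a \<otimes> g))"
      "nov_mult G f k g = (\<Sum>a\<in>?A. f a * k (inv a \<otimes> g))"
      "nov_mult G h k g = (\<Sum>a\<in>?A. h a * k (inv a \<otimes> g))"
      by (rule nov_mult_eq_sum[OF add_NC[OF f h] g fin] nov_mult_eq_sum[OF f g fin]
          nov_mult_eq_sum[OF h g fin]; blast)+
    then show ?thesis by (simp add: sum.distrib distrib_right)
  qed (simp add: nov_mult_outside)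
qed

lemma nov_mult_add_right:
  assumes f: "f \<in> NC" and h: "h \<in> NC" and k: "k \<in> NC"
  shows "nov_mult G k (\<lambda>g. f g + h g) = (\<lambda>g. nov_mult G k f g + nov_mult G k h g)"
proof
  fix g
  show "nov_mult G k (\<lambda>g. f g + h g) g = nov_mult G k f g + nov_mult G k h g"
  proof (cases "g \<in> carrier G")
    case g: True
    let ?A = "conv_support k f g \<union> conv_support k h g \<union> conv_support k (\<lambda>g. f g + h g) g"
    have fin: "finite ?A"
      using finite_conv_support[OF k f g] finite_conv_support[OF k h g]
        finite_conv_support[OF k add_NC[OF f h] g] by simp
    have "nov_mult G k (\<lambda>g. f g + h g) g = (\<Sum>a\<in>?A. k a * (f (inv a \<otimes> g) + h (inv a \<otimes> g)))"
      "nov_mult G k f g = (\<Sum>a\<in>?A. k a * f (inv a \<otimes> g))"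
      "nov_mult G k h g = (\<Sum>a\<in>?A. k a * h (inv a \<otimes> g))"
      by (rule nov_mult_eq_sum[OF k g fin]; blast)+
    then show ?thesis by (simp add: sum.distrib distrib_left)
  qed (simp add: nov_mult_outside)
qed

lemma monom_nov_mult:
  assumes x: "x \<in> carrier G" and g: "g \<in> carrier G"
  shows "nov_mult G (monom s x) f g = s * f (inv x \<otimes> g)"
  by (subst nov_mult_eq_sum[OF monom_NC[OF x] g, of "{x}"]) (auto simp: conv_support_def monom_def)

lemma nov_mult_monom:
  assumes f: "f \<in> NC" and x: "x \<in> carrier G" and g: "g \<in> carrier G"
  shows "nov_mult G f (monom s x) g = f (g \<otimes> inv x) * s"
proof -
  have "inv k \<otimes> g = x \<longleftrightarrow> k = g \<otimes> inv x" if "k \<in> carrier G" for k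
    using that x g by (metis inv_closed inv_solve_left' inv_solve_right m_closed)
  then have "nov_mult G f (monom s x) g = (\<Sum>k\<in>{g \<otimes> inv x}. f k * monom s x (inv k \<otimes> g))"
    by (intro nov_mult_eq_sum[OF f g]) (auto simp: conv_support_def monom_def)
  moreover have "inv (g \<otimes> inv x) \<otimes> g = x" using x g by (simp add: inv_mult_group m_assoc)
  ultimately show ?thesis by (simp add: monom_def)
qed

lemma monom_mult:
  assumes x: "x \<in> carrier G" and y: "y \<in> carrier G"
  shows "nov_mult G (monom s x) (monom t y) = monom (s * t) (x \<otimes> y)"
proof
  fix g
  show "nov_mult G (monom s x) (monom t y) g = monom (s * t) (x \<otimes> y) g"
  proof (cases "g \<in> carrier G")
    case True
    then have "inv x \<otimes> g = y \<longleftrightarrow> g = x \<otimes> y"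
      using x y by (metis inv_closed inv_solve_left' m_closed)
    then show ?thesis using True x by (simp add: monom_nov_mult) (simp add: monom_def)
  qed (use x y in \<open>auto simp: nov_mult_outside monom_def\<close>)
qed

lemma ring_Nov: "ring Nov"
proof (rule ringI)
  show "abelian_group Nov"
  proof (rule abelian_groupI)
    fix f assume "f \<in> carrier Nov"
    then show "\<exists>h\<in>carrier Nov. h \<oplus>\<^bsub>Nov\<^esub> f = \<zero>\<^bsub>Nov\<^esub>"
      using uminus_NC by (intro bexI[of _ "\<lambda>g. - f g"]) auto
  qed (auto simp: add_NC zero_NC)
  show "monoid Nov"
  proof (rule monoidI)
    fix f assume f: "f \<in> carrier Nov"
    have "nov_mult G (monom 1 \<one>) f g = f g" "nov_mult G f (monom 1 \<one>) g = f g" for g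
      using f NC_outside[of f g] by (cases "g \<in> carrier G"; simp add: monom_nov_mult nov_mult_monom nov_mult_outside)+
    then show "\<one>\<^bsub>Nov\<^esub> \<otimes>\<^bsub>Nov\<^esub> f = f" "f \<otimes>\<^bsub>Nov\<^esub> \<one>\<^bsub>Nov\<^esub> = f"
      by (auto simp: one_Nov)
  qed (auto simp: one_Nov monom_NC nov_mult_closed nov_mult_assoc)
qed (auto simp: nov_mult_add_left nov_mult_add_right)

lemma monom_Units:
  assumes x: "x \<in> carrier G" and s: "s = 1 \<or> s = -1"
  shows "monom s x \<in> Units Nov" and "inv\<^bsub>Nov\<^esub> (monom s x) = monom s (inv x)"
proof -
  have inverse: "monom s x \<otimes>\<^bsub>Nov\<^esub> monom s (inv x) = \<one>\<^bsub>Nov\<^esub>"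
    "monom s (inv x) \<otimes>\<^bsub>Nov\<^esub> monom s x = \<one>\<^bsub>Nov\<^esub>"
    using x s by (auto simp: monom_mult one_Nov)
  then show "monom s x \<in> Units Nov"
    using x by (auto simp: Units_def monom_NC)
  show "inv\<^bsub>Nov\<^esub> (monom s x) = monom s (inv x)"
    using monoid.inv_char[OF ring.is_monoid[OF ring_Nov] _ _ inverse] x by (simp add: monom_NC)
qed

lemma nov_mult_comm:
  assumes comm: "\<And>x y. x \<in> carrier G \<Longrightarrow> y \<in> carrier G \<Longrightarrow> x \<otimes> y = y \<otimes> x"
    and f: "f \<in> NC" and h: "h \<in> NC"
  shows "nov_mult G f h = nov_mult G h f"
proof
  fix g
  show "nov_mult G f h g = nov_mult G h f g"
  proof (cases "g \<in> carrier G")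
    case g: True
    let ?m = "\<lambda>k. inv k \<otimes> g"
    have mm: "?m (?m k) = k" if "k \<in> carrier G" for k
      using that g comm[of "inv g" k] by (simp add: inv_mult_group m_assoc)
    have inj: "inj_on ?m (conv_support f h g)"
    proof (rule inj_onI)
      fix x y assume "x \<in> conv_support f h g" "y \<in> conv_support f h g" and xy: "?m x = ?m y"
      then have "x \<in> carrier G" "y \<in> carrier G" by (auto simp: conv_support_def)
      then show "x = y" using mm xy by metis
    qed
    have image: "?m ` conv_support f h g = conv_support h f g"
    proof (intro equalityI subsetI)
      fix k assume "k \<in> ?m ` conv_support f h g"
      then obtain k0 where "k0 \<in> carrier G" "f k0 \<noteq> 0" "h (inv k0 \<otimes> g) \<noteq> 0" "k = inv k0 \<otimes> g"
        by (auto simp: conv_support_def)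
      then show "k \<in> conv_support h f g" using mm[of k0] g by (auto simp: conv_support_def)
    next
      fix k assume "k \<in> conv_support h f g"
      then have "?m k \<in> conv_support f h g" "k = ?m (?m k)" using mm g by (auto simp: conv_support_def)
      then show "k \<in> ?m ` conv_support f h g" by blast
    qed
    have "nov_mult G h f g = (\<Sum>k\<in>?m ` conv_support f h g. h k * f (inv k \<otimes> g))"
      using g unfolding image by (simp add: nov_mult_def conv_support_def)
    also have "\<dots> = (\<Sum>k\<in>conv_support f h g. h (?m k) * f (?m (?m k)))"
      by (simp add: sum.reindex[OF inj])
    also have "\<dots> = (\<Sum>k\<in>conv_support f h g. f k * h (inv k \<otimes> g))"
      using mm by (intro sum.cong refl) (simp add: conv_support_def)
    also have "\<dots> = nov_mult G f h g" using g by (simp add: nov_mult_def conv_support_def)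
    finally show ?thesis by simp
  qed (simp add: nov_mult_outside)
qed

lemma cring_Nov:
  assumes "\<And>x y. x \<in> carrier G \<Longrightarrow> y \<in> carrier G \<Longrightarrow> x \<otimes> y = y \<otimes> x"
  shows "cring Nov"
proof -
  interpret ring Nov by (rule ring_Nov)
  show ?thesis
    by (intro cringI is_abelian_group monoid_comm_monoidI)
      (simp_all add: nov_mult_comm[OF assms] nov_mult_add_left)
qed

lemma nov_norm_less_one_negative:
  assumes a: "a \<in> NC" and norm: "nov_norm \<xi> a < 1" and g: "a g \<noteq> 0"
  shows "\<xi> g < 0"
proof (rule ccontr)
  assume "\<not> \<xi> g < 0"
  let ?T = "{t::real. t > 0 \<and> (\<forall>g. a g \<noteq> 0 \<longrightarrow> \<xi> g \<le> ln t)}"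
  obtain M where "\<And>x. a x \<noteq> 0 \<Longrightarrow> \<xi> x \<le> M" using NC_bounded_above[OF a] by blast
  then have "exp M \<in> ?T" by auto
  moreover have "1 \<le> t" if t: "t \<in> ?T" for t
  proof -
    have "\<xi> g \<le> ln t" using t g by blast
    then have "0 \<le> ln t" using \<open>\<not> \<xi> g < 0\<close> by linarith
    then show ?thesis using t by (simp add: ln_ge_zero_iff)
  qed
  ultimately have "1 \<le> Inf ?T" by (intro cInf_greatest) blast+
  then show False using norm by (simp add: nov_norm_def)
qed

text \<open>Compare the coefficients of \<open>x\<close> and of \<open>\<one>\<close>: both \<open>a\<close> and \<open>b\<close> vanish at
  \<open>\<one>\<close>, so \<open>x \<noteq> \<one>\<close> would force \<open>a x \<noteq> 0\<close> and \<open>b (inv x) \<noteq> 0\<close>, i.e.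
  \<open>\<xi> x < 0\<close> and \<open>\<xi> (inv x) < 0\<close>.\<close>

lemma one_minus_eq_monom_mult_one_minus:
  assumes a: "\<And>g. a g \<noteq> 0 \<Longrightarrow> \<xi> g < 0" and b: "\<And>g. b g \<noteq> 0 \<Longrightarrow> \<xi> g < 0"
    and x: "x \<in> carrier G" and s: "s = 1 \<or> s = -1"
    and eq: "(\<lambda>g. \<one>\<^bsub>Nov\<^esub> g - a g) = nov_mult G (monom s x) (\<lambda>g. \<one>\<^bsub>Nov\<^esub> g - b g)"
  shows "s = 1 \<and> x = \<one>"
proof -
  have coeff: "monom 1 \<one> g - a g = s * (monom 1 \<one> (inv x \<otimes> g) - b (inv x \<otimes> g))"
    if "g \<in> carrier G" for g
    using fun_cong[OF eq, of g] monom_nov_mult[OF x that] by (simp add: one_Nov)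
  have "a \<one> = 0" "b \<one> = 0" using a[of \<one>] b[of \<one>] by auto
  then have at_x: "monom 1 \<one> x - a x = s" and at_one: "1 = s * (monom 1 \<one> (inv x) - b (inv x))"
    using coeff[of x] coeff[of \<one>] x by (simp_all add: monom_def)
  show ?thesis
  proof (cases "x = \<one>")
    case True
    then show ?thesis using at_x \<open>a \<one> = 0\<close> by (simp add: monom_def)
  next
    case False
    then have "\<xi> x < 0" using at_x s a[of x] by (auto simp: monom_def)
    moreover have "inv x \<noteq> \<one>" using False x by (metis inv_eq_1_iff)
    then have "b (inv x) \<noteq> 0" using at_one by (auto simp: monom_def)
    then have "\<xi> (inv x) < 0" by (rule b)
    ultimately show ?thesis using x by simp
  qed
qed

end

section \<open>Functoriality along group homomorphisms\<close>

locale novikov_hom = novikov G \<xi> + H: novikov H \<eta> + group_hom G H \<pi>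
  for G (structure) and \<xi> and H (structure) and \<eta> and \<pi> +
  assumes xi_eq: "x \<in> carrier G \<Longrightarrow> \<xi> x = \<eta> (\<pi> x)"
begin

definition push :: "('a \<Rightarrow> int) \<Rightarrow> 'c \<Rightarrow> int" where
  "push f y = (if y \<in> carrier H then (\<Sum>x | x \<in> carrier G \<and> \<pi> x = y \<and> f x \<noteq> 0. f x) else 0)"

lemma finite_fiber_support: "f \<in> NC \<Longrightarrow> finite {x. x \<in> carrier G \<and> \<pi> x = y \<and> f x \<noteq> 0}"
  by (rule finite_subset[OF _ NC_finite_above[of f "\<eta> y"]]) (auto simp: xi_eq)

lemma push_eq_sum:
  assumes f: "f \<in> NC" and y: "y \<in> carrier H" and F: "finite F"
    and supp: "{x. x \<in> carrier G \<and> \<pi> x = y \<and> f x \<noteq> 0} \<subseteq> F" and fiber: "F \<subseteq> {x \<in> carrier G. \<pi> x = y}"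
  shows "push f y = (\<Sum>x\<in>F. f x)"
  unfolding push_def using y supp fiber by (auto intro!: sum.mono_neutral_left[OF F])

lemma push_nonzeroE:
  assumes "push f y \<noteq> 0"
  obtains x where "y \<in> carrier H" "x \<in> carrier G" "\<pi> x = y" "f x \<noteq> 0"
  using assms by (cases "y \<in> carrier H") (auto simp: push_def intro: sum.neutral)

lemma push_closed:
  assumes f: "f \<in> NC"
  shows "push f \<in> H.NC"
proof -
  have "{y \<in> carrier H. r \<le> \<eta> y \<and> push f y \<noteq> 0} \<subseteq> \<pi> ` {x. r \<le> \<xi> x \<and> f x \<noteq> 0}" for r
    by (force simp: xi_eq elim: push_nonzeroE)
  then have "finite {y \<in> carrier H. r \<le> \<eta> y \<and> push f y \<noteq> 0}" for r
    using NC_finite_above[OF f] by (meson finite_imageI finite_subset)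
  moreover have "push f y = 0" if "y \<notin> carrier H" for y
    using that by (simp add: push_def)
  ultimately show ?thesis by (simp add: nov_carrier_def)
qed

lemma push_add:
  assumes f: "f \<in> NC" and h: "h \<in> NC"
  shows "push (\<lambda>g. f g + h g) = (\<lambda>y. push f y + push h y)"
proof
  fix y
  show "push (\<lambda>g. f g + h g) y = push f y + push h y"
  proof (cases "y \<in> carrier H")
    case y: True
    let ?F = "{x. x \<in> carrier G \<and> \<pi> x = y \<and> f x \<noteq> 0} \<union> {x. x \<in> carrier G \<and> \<pi> x = y \<and> h x \<noteq> 0}"
    have fin: "finite ?F" using finite_fiber_support[OF f] finite_fiber_support[OF h] by simp
    have "push (\<lambda>g. f g + h g) y = (\<Sum>x\<in>?F. f x + h x)" "push f y = (\<Sum>x\<in>?F. f x)"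
      "push h y = (\<Sum>x\<in>?F. h x)"
      by (rule push_eq_sum[OF add_NC[OF f h] y fin] push_eq_sum[OF f y fin] push_eq_sum[OF h y fin]; auto)+
    then show ?thesis by (simp add: sum.distrib)
  qed (simp add: push_def)
qed

lemma push_monom:
  assumes x: "x \<in> carrier G"
  shows "push (monom s x) = monom s (\<pi> x)"
proof
  fix y
  show "push (monom s x) y = monom s (\<pi> x) y"
  proof (cases "y \<in> carrier H")
    case y: True
    have "push (monom s x) y = (\<Sum>g\<in>(if \<pi> x = y then {x} else {}). monom s x g)"
      by (rule push_eq_sum[OF monom_NC[OF x] y]) (use x in \<open>auto simp: monom_def\<close>)
    then show ?thesis by (simp add: monom_def)
  qed (use x in \<open>auto simp: push_def monom_def\<close>)
qed

definition mult_pairs :: "('a \<Rightarrow> int) \<Rightarrow> ('a \<Rightarrow> int) \<Rightarrow> 'c \<Rightarrow> ('a \<times> 'a) set" where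
  "mult_pairs f h y = {(k, b). k \<in> carrier G \<and> b \<in> carrier G \<and> f k \<noteq> 0 \<and> h b \<noteq> 0 \<and> \<pi> (k \<otimes> b) = y}"

lemma finite_mult_pairs:
  assumes f: "f \<in> NC" and h: "h \<in> NC"
  shows "finite (mult_pairs f h y)"
proof -
  obtain Mf Mh where Mf: "\<And>x. f x \<noteq> 0 \<Longrightarrow> \<xi> x \<le> Mf" and Mh: "\<And>x. h x \<noteq> 0 \<Longrightarrow> \<xi> x \<le> Mh"
    using NC_bounded_above[OF f] NC_bounded_above[OF h] by metis
  have "mult_pairs f h y \<subseteq> {k. \<eta> y - Mh \<le> \<xi> k \<and> f k \<noteq> 0} \<times> {b. \<eta> y - Mf \<le> \<xi> b \<and> h b \<noteq> 0}"
    (is "_ \<subseteq> ?window")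
  proof
    fix p assume "p \<in> mult_pairs f h y"
    then obtain k b where kb: "p = (k, b)" "k \<in> carrier G" "b \<in> carrier G" "f k \<noteq> 0" "h b \<noteq> 0"
      "\<pi> (k \<otimes> b) = y"
      by (auto simp: mult_pairs_def)
    then have "\<eta> y = \<xi> k + \<xi> b" using xi_eq[of "k \<otimes> b"] by (simp add: xi_mult)
    then show "p \<in> ?window" using kb Mf[of k] Mh[of b] by auto
  qed
  then show ?thesis using NC_finite_above[OF f] NC_finite_above[OF h] finite_subset by blast
qed

lemma push_nov_mult_eq_pair_sum:
  assumes f: "f \<in> NC" and h: "h \<in> NC" and y: "y \<in> carrier H"
  shows "push (nov_mult G f h) y = (\<Sum>(k, b)\<in>mult_pairs f h y. f k * h b)"
proof -
  let ?P = "mult_pairs f h y"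
  define C where "C = (\<lambda>(k, b). k \<otimes> b) ` ?P"
  define \<phi> where "\<phi> = (\<lambda>(k, b). (k \<otimes> b, k))"
  have finP: "finite ?P" using finite_mult_pairs[OF f h] .
  have finC: "finite C" "finite (fst ` ?P)" unfolding C_def using finP by auto
  have in_P: "(k, inv k \<otimes> g) \<in> ?P"
    if "k \<in> carrier G" "g \<in> carrier G" "\<pi> g = y" "f k \<noteq> 0" "h (inv k \<otimes> g) \<noteq> 0" for k g
    using that by (simp add: mult_pairs_def m_assoc[symmetric])
  have C_fiber: "g \<in> carrier G \<and> \<pi> g = y" if "g \<in> C" for g
    using that by (auto simp: C_def mult_pairs_def)
  have "push (nov_mult G f h) y = (\<Sum>g\<in>C. nov_mult G f h g)"
  proof (rule push_eq_sum[OF nov_mult_closed[OF f h] y finC(1)])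
    show "{x. x \<in> carrier G \<and> \<pi> x = y \<and> nov_mult G f h x \<noteq> 0} \<subseteq> C"
    proof (rule subsetI, elim CollectE conjE)
      fix x assume x: "x \<in> carrier G" "\<pi> x = y" "nov_mult G f h x \<noteq> 0"
      obtain k where "k \<in> carrier G" "f k \<noteq> 0" "h (inv k \<otimes> x) \<noteq> 0"
        using x(3) by (rule nov_mult_nonzeroE)
      then have "(k, inv k \<otimes> x) \<in> ?P" "x = k \<otimes> (inv k \<otimes> x)"
        using in_P x by (auto simp: m_assoc[symmetric])
      then show "x \<in> C" unfolding C_def by force
    qed
  qed (use C_fiber in auto)
  also have "\<dots> = (\<Sum>g\<in>C. \<Sum>k\<in>fst ` ?P. f k * h (inv k \<otimes> g))"
    using C_fiber in_P
    by (intro sum.cong refl nov_mult_eq_sum[OF f _ finC(2)]) (force simp: conv_support_def)+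
  also have "\<dots> = (\<Sum>(g, k)\<in>\<phi> ` ?P. f k * h (inv k \<otimes> g))"
    unfolding sum.cartesian_product
  proof (rule sum.mono_neutral_right)
    show "\<phi> ` ?P \<subseteq> C \<times> fst ` ?P" by (force simp: \<phi>_def C_def)
    show "\<forall>p\<in>C \<times> fst ` ?P - \<phi> ` ?P. (case p of (g, k) \<Rightarrow> f k * h (inv k \<otimes> g)) = 0"
    proof (clarsimp)
      fix g k b assume "g \<in> C" "(k, b) \<in> ?P" "(g, k) \<notin> \<phi> ` ?P" "h (inv k \<otimes> g) \<noteq> 0"
      then have "(k, inv k \<otimes> g) \<in> ?P" "(g, k) = \<phi> (k, inv k \<otimes> g)"
        using in_P C_fiber by (auto simp: mult_pairs_def \<phi>_def m_assoc[symmetric])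
      with \<open>(g, k) \<notin> \<phi> ` ?P\<close> show "f k = 0" by blast
    qed
  qed (use finC in auto)
  also have "\<dots> = (\<Sum>(k, b)\<in>?P. f k * h b)"
  proof -
    have inj: "inj_on \<phi> ?P"
    proof (rule inj_onI)
      fix p q assume "p \<in> ?P" "q \<in> ?P" "\<phi> p = \<phi> q"
      then show "p = q" by (cases p; cases q) (simp add: \<phi>_def mult_pairs_def)
    qed
    have "(\<Sum>(g, k)\<in>\<phi> ` ?P. f k * h (inv k \<otimes> g)) = (\<Sum>p\<in>?P. (\<lambda>(g, k). f k * h (inv k \<otimes> g)) (\<phi> p))"
      by (rule sum.reindex[OF inj, unfolded comp_def])
    also have "\<dots> = (\<Sum>(k, b)\<in>?P. f k * h b)"
      by (intro sum.cong refl) (auto simp: \<phi>_def mult_pairs_def m_assoc[symmetric])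
    finally show ?thesis .
  qed
  finally show ?thesis .
qed

lemma nov_mult_push_eq_pair_sum:
  assumes f: "f \<in> NC" and h: "h \<in> NC" and y: "y \<in> carrier H"
  shows "nov_mult H (push f) (push h) y = (\<Sum>(k, b)\<in>mult_pairs f h y. f k * h b)"
proof -
  let ?P = "mult_pairs f h y"
  let ?A = "fst ` ?P" and ?B = "snd ` ?P"
  let ?Ad = "\<lambda>d. {k \<in> ?A. \<pi> k = d}" and ?Bd = "\<lambda>d. {b \<in> ?B. \<pi> b = inv\<^bsub>H\<^esub> d \<otimes>\<^bsub>H\<^esub> y}"
  have finP: "finite ?P" using finite_mult_pairs[OF f h] .
  have P: "(k, b) \<in> ?P \<longleftrightarrow> k \<in> carrier G \<and> b \<in> carrier G \<and> f k \<noteq> 0 \<and> h b \<noteq> 0 \<and> \<pi> k \<otimes>\<^bsub>H\<^esub> \<pi> b = y"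
    for k b by (auto simp: mult_pairs_def)
  have fiber_eq: "\<pi> b = inv\<^bsub>H\<^esub> (\<pi> k) \<otimes>\<^bsub>H\<^esub> y \<longleftrightarrow> \<pi> k \<otimes>\<^bsub>H\<^esub> \<pi> b = y"
    if "k \<in> carrier G" "b \<in> carrier G" for k b
    using that y by (metis H.inv_solve_left hom_closed)
  have "nov_mult H (push f) (push h) y = (\<Sum>d\<in>\<pi> ` ?A. push f d * push h (inv\<^bsub>H\<^esub> d \<otimes>\<^bsub>H\<^esub> y))"
  proof (rule H.nov_mult_eq_sum[OF push_closed[OF f] y], rule finite_imageI, use finP in simp, rule subsetI)
    fix d assume "d \<in> H.conv_support (push f) (push h) y"
    then have d: "push f d \<noteq> 0" "push h (inv\<^bsub>H\<^esub> d \<otimes>\<^bsub>H\<^esub> y) \<noteq> 0"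
      by (auto simp: H.conv_support_def)
    obtain k b where "k \<in> carrier G" "\<pi> k = d" "f k \<noteq> 0" "b \<in> carrier G" "\<pi> b = inv\<^bsub>H\<^esub> d \<otimes>\<^bsub>H\<^esub> y" "h b \<noteq> 0"
      using d by (metis push_nonzeroE)
    then show "d \<in> \<pi> ` ?A" using P fiber_eq by (metis fst_conv image_eqI)
  qed
  also have "\<dots> = (\<Sum>d\<in>\<pi> ` ?A. (\<Sum>k\<in>?Ad d. f k) * (\<Sum>b\<in>?Bd d. h b))"
  proof (intro sum.cong refl arg_cong2[where f = "(*)"])
    fix d assume "d \<in> \<pi> ` ?A"
    then obtain k0 b0 where kb0: "(k0, b0) \<in> ?P" "d = \<pi> k0" by force
    then have kb0c: "k0 \<in> carrier G" "b0 \<in> carrier G" by (auto simp: mult_pairs_def)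
    show "push f d = (\<Sum>k\<in>?Ad d. f k)"
    proof (rule push_eq_sum[OF f], use kb0c kb0 finP in auto)
      fix k assume "k \<in> carrier G" "f k \<noteq> 0" "\<pi> k = \<pi> k0"
      then have "(k, b0) \<in> ?P" using kb0 P by auto
      then show "k \<in> fst ` ?P" by force
    qed (auto simp: mult_pairs_def)
    show "push h (inv\<^bsub>H\<^esub> d \<otimes>\<^bsub>H\<^esub> y) = (\<Sum>b\<in>?Bd d. h b)"
    proof (rule push_eq_sum[OF h], use kb0c kb0 y finP in auto)
      fix b assume "b \<in> carrier G" "h b \<noteq> 0" "\<pi> b = inv\<^bsub>H\<^esub> \<pi> k0 \<otimes>\<^bsub>H\<^esub> y"
      then have "(k0, b) \<in> ?P" using kb0 P fiber_eq by auto
      then show "b \<in> snd ` ?P" by force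
    qed (auto simp: mult_pairs_def)
  qed
  also have "\<dots> = (\<Sum>d\<in>\<pi> ` ?A. \<Sum>k\<in>?Ad d. \<Sum>b\<in>?Bd (\<pi> k). f k * h b)"
    by (simp add: sum_product)
  also have "\<dots> = (\<Sum>k\<in>?A. \<Sum>b\<in>?Bd (\<pi> k). f k * h b)"
    using finP by (intro sum.group) auto
  also have "\<dots> = (\<Sum>(k, b)\<in>Sigma ?A (\<lambda>k. ?Bd (\<pi> k)). f k * h b)"
    using finP by (intro sum.Sigma) auto
  also have "Sigma ?A (\<lambda>k. ?Bd (\<pi> k)) = ?P"
    using P fiber_eq by (auto simp: image_iff) (metis fst_conv snd_conv)+
  finally show ?thesis .
qed

lemma push_nov_mult:
  assumes "f \<in> NC" "h \<in> NC"
  shows "push (nov_mult G f h) = nov_mult H (push f) (push h)"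
proof
  fix y
  show "push (nov_mult G f h) y = nov_mult H (push f) (push h) y"
    using assms push_nov_mult_eq_pair_sum nov_mult_push_eq_pair_sum
    by (cases "y \<in> carrier H") (simp_all add: push_def H.nov_mult_outside)
qed

lemma ring_hom_push: "push \<in> ring_hom Nov H.Nov"
  by (intro ring_hom_memI)
    (simp_all add: push_closed push_nov_mult push_add one_Nov H.one_Nov push_monom)

lemma push_diff:
  assumes f: "f \<in> NC" and h: "h \<in> NC"
  shows "push (\<lambda>g. f g - h g) = (\<lambda>y. push f y - push h y)"
  using push_add[OF diff_NC[OF f h] h] by (simp add: fun_eq_iff eq_diff_eq)

lemma push_negative:
  assumes "\<And>g. a g \<noteq> 0 \<Longrightarrow> \<xi> g < 0" and "push a y \<noteq> 0"
  shows "\<eta> y < 0"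
  using assms(2) by (rule push_nonzeroE) (use assms(1) xi_eq in force)

end

section \<open>Abelianization and trivial units\<close>

sublocale novikov \<subseteq> NR: ring "novikov_ring G \<xi>"
  by (rule ring_Nov)

context novikov
begin

abbreviation "DG \<equiv> derived G (carrier G)"

lemma xi_derived: "n \<in> DG \<Longrightarrow> \<xi> n = 0"
proof -
  have "subgroup {x \<in> carrier G. \<xi> x = 0} G"
    by (rule subgroupI) (auto simp: xi_mult)
  moreover have "derived_set G (carrier G) \<subseteq> {x \<in> carrier G. \<xi> x = 0}"
    by (auto simp: xi_mult)
  ultimately show "n \<in> DG \<Longrightarrow> \<xi> n = 0"
    unfolding derived_def using generate_subgroup_incl by blast
qed

lemma xi_derived_coset:
  assumes x: "x \<in> carrier G" and g: "g \<in> DG #> x"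
  shows "\<xi> g = \<xi> x"
proof -
  obtain n where "n \<in> DG" "g = n \<otimes> x" using g by (auto simp: r_coset_def)
  then show ?thesis using x xi_derived derived_in_carrier[of "carrier G"] by (auto simp: xi_mult)
qed

definition ab_xi :: "'a set \<Rightarrow> real" where
  "ab_xi C = \<xi> (SOME g. g \<in> C)"

lemma ab_xi_coset: "x \<in> carrier G \<Longrightarrow> ab_xi (DG #> x) = \<xi> x"
  unfolding ab_xi_def
  by (rule xi_derived_coset, assumption, rule someI[of _ x], rule rcos_self, simp_all add: derived_is_subgroup)

lemma novikov_hom_abelianization: "novikov_hom G \<xi> (G Mod DG) ab_xi ((#>) DG)"
proof -
  interpret DG: normal DG G by (rule derived_self_is_normal)
  interpret Gab: group "G Mod DG" by (rule DG.factorgroup_is_group)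
  have "novikov (G Mod DG) ab_xi"
    by unfold_locales (auto simp: carrier_FactGroup DG.rcos_sum ab_xi_coset xi_mult)
  moreover have "group_hom G (G Mod DG) ((#>) DG)"
    by unfold_locales (rule DG.r_coset_hom_Mod)
  ultimately show ?thesis
    by (intro novikov_hom.intro novikov_hom_axioms.intro) (simp_all add: novikov_axioms ab_xi_coset)
qed

lemma cring_Nov_abelianization: "cring (novikov_ring (G Mod DG) ab_xi)"
proof -
  interpret novikov_hom G \<xi> "G Mod DG" ab_xi "(#>) DG" by (rule novikov_hom_abelianization)
  interpret Gab: comm_group "G Mod DG" by (rule derived_quot_is_comm_group)
  show ?thesis by (intro H.cring_Nov Gab.m_comm)
qed

lemma k1_class_mult_k1_class:
  assumes u: "u \<in> Units Nov" and v: "v \<in> NC"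
  shows "k1_class Nov u <#>\<^bsub>GL Nov\<^esub> k1_class Nov v = k1_class Nov (nov_mult G u v)"
proof -
  have "k1_class Nov u <#>\<^bsub>GL Nov\<^esub> k1_class Nov v
      = EL Nov #>\<^bsub>GL Nov\<^esub> mat_mult Nov (embed1 Nov u) (embed1 Nov v)"
    unfolding k1_class_def[of _ v] using v by (intro NR.k1_class_mult[OF u] NR.finitary_embed1) simp
  also have "mat_mult Nov (embed1 Nov u) (embed1 Nov v) = embed1 Nov (nov_mult G u v)"
    using u v NR.embed1_mult[of u v] by (simp add: Units_def)
  finally show ?thesis by (simp add: k1_class_def)
qed

lemma nov_trivial_subset:
  "nov_trivial G \<xi> \<subseteq> {k1_class Nov (monom s g) | s g. g \<in> carrier G \<and> (s = 1 \<or> s = -1)}"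
proof
  fix t assume "t \<in> nov_trivial G \<xi>"
  then show "t \<in> {k1_class Nov (monom s g) | s g. g \<in> carrier G \<and> (s = 1 \<or> s = -1)}"
    unfolding nov_trivial_def
  proof (induction t rule: generate.induct)
    case one
    have "EL Nov #>\<^bsub>GL Nov\<^esub> mat_one Nov = EL Nov"
      using group.coset_mult_one[OF NR.group_GL] subgroup.subset[OF NR.subgroup_EL] by simp
    then have "\<one>\<^bsub>K1 Nov\<^esub> = k1_class Nov (monom 1 \<one>)"
      by (simp add: K1_def k1_class_def NR.embed1_one flip: one_Nov)
    then show ?case by blast
  next
    case (incl t)
    then show ?case by (auto simp: monom_def)
  next
    case (inv t)
    then obtain s g where t: "t = k1_class Nov (monom s g)" and g: "g \<in> carrier G" and s: "s = 1 \<or> s = -1"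
      by (auto simp: monom_def)
    then have "inv\<^bsub>K1 Nov\<^esub> t = k1_class Nov (monom s (inv g))"
      using NR.inv_K1_k1_class[OF monom_Units(1)[OF g s]] monom_Units(2)[OF g s] by simp
    then show ?case using g s by blast
  next
    case (eng t1 t2)
    then obtain s1 g1 s2 g2 where t: "t1 = k1_class Nov (monom s1 g1)" "g1 \<in> carrier G" "s1 = 1 \<or> s1 = -1"
      "t2 = k1_class Nov (monom s2 g2)" "g2 \<in> carrier G" "s2 = 1 \<or> s2 = -1"
      by blast
    then have "t1 \<otimes>\<^bsub>K1 Nov\<^esub> t2 = k1_class Nov (monom (s1 * s2) (g1 \<otimes> g2))"
      using k1_class_mult_k1_class[OF monom_Units(1) monom_NC] by (simp add: K1_def monom_mult)
    moreover have "s1 * s2 = 1 \<or> s1 * s2 = -1" using t by auto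
    ultimately show ?case using t by blast
  qed
qed

lemma embed1_monom_derived_EL:
  assumes g: "g \<in> DG"
  shows "embed1 Nov (monom 1 g) \<in> EL Nov"
proof -
  let ?K = "{g \<in> carrier G. embed1 Nov (monom 1 g) \<in> EL Nov}"
  have embed1_mult: "embed1 Nov (monom 1 (a \<otimes> b)) = mat_mult Nov (embed1 Nov (monom 1 a)) (embed1 Nov (monom 1 b))"
    if "a \<in> carrier G" "b \<in> carrier G" for a b
    using that by (simp add: NR.embed1_mult monom_NC monom_mult)
  have "subgroup ?K G"
  proof (rule subgroupI)
    show "?K \<noteq> {}"
      using subgroup.one_closed[OF NR.subgroup_EL] by (auto simp: NR.embed1_one simp flip: one_Nov)
  next
    fix a assume "a \<in> ?K"
    then show "inv a \<in> ?K"
      using subgroup.m_inv_closed[OF NR.subgroup_EL] NR.inv_embed1 monom_Units by fastforce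
  next
    fix a b assume "a \<in> ?K" "b \<in> ?K"
    then show "a \<otimes> b \<in> ?K" using embed1_mult NR.mat_mult_EL by auto
  qed auto
  moreover have "derived_set G (carrier G) \<subseteq> ?K"
  proof (clarsimp)
    fix h1 h2 assume h: "h1 \<in> carrier G" "h2 \<in> carrier G"
    then have "monom 1 (h1 \<otimes> h2 \<otimes> inv h1 \<otimes> inv h2) = nov_mult G (nov_mult G (nov_mult G
        (monom 1 h1) (monom 1 h2)) (inv\<^bsub>Nov\<^esub> (monom 1 h1))) (inv\<^bsub>Nov\<^esub> (monom 1 h2))"
      by (simp add: monom_Units monom_mult)
    then show "embed1 Nov (monom 1 (h1 \<otimes> h2 \<otimes> inv h1 \<otimes> inv h2)) \<in> EL Nov"
      using NR.embed1_commutator_EL[OF monom_Units(1) monom_Units(1)] h by simp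
  qed
  ultimately have "DG \<subseteq> ?K" unfolding derived_def by (rule generate_subgroup_incl[rotated])
  then show ?thesis using g by blast
qed

lemma k1_class_one_minus_eq_trivial_mult:
  assumes a: "a \<in> NC" "nov_norm \<xi> a < 1" and b: "b \<in> NC" "nov_norm \<xi> b < 1"
    and g: "g \<in> carrier G" and s: "s = 1 \<or> s = -1"
    and eq: "k1_class Nov (\<lambda>h. \<one>\<^bsub>Nov\<^esub> h - a h)
      = k1_class Nov (monom s g) <#>\<^bsub>GL Nov\<^esub> k1_class Nov (\<lambda>h. \<one>\<^bsub>Nov\<^esub> h - b h)"
  shows "s = 1 \<and> g \<in> DG"
proof -
  interpret novikov_hom G \<xi> "G Mod DG" ab_xi "(#>) DG" by (rule novikov_hom_abelianization)
  define ua where "ua = (\<lambda>h. \<one>\<^bsub>Nov\<^esub> h - a h)"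
  define ub where "ub = (\<lambda>h. \<one>\<^bsub>Nov\<^esub> h - b h)"
  define m where "m = nov_mult G (monom s g) ub"
  have one: "\<one>\<^bsub>Nov\<^esub> \<in> NC" by (simp add: one_Nov monom_NC)
  have ua: "ua \<in> NC" unfolding ua_def using diff_NC[OF one a(1)] .
  have ub: "ub \<in> NC" unfolding ub_def using diff_NC[OF one b(1)] .
  have m: "m \<in> NC" unfolding m_def using nov_mult_closed[OF monom_NC[OF g] ub] .
  have "EL Nov #>\<^bsub>GL Nov\<^esub> embed1 Nov ua = EL Nov #>\<^bsub>GL Nov\<^esub> embed1 Nov m"
    using eq k1_class_mult_k1_class[OF monom_Units(1)[OF g s] ub] by (simp add: k1_class_def ua_def ub_def m_def)
  then obtain E where "E \<in> EL Nov" "embed1 Nov ua = mat_mult Nov E (embed1 Nov m)"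
    using NR.EL_rcos_eq_imp NR.finitary_embed1 ua by (metis carrier_Nov)
  then have "push ua = push m"
    using NR.ring_hom_eq_if_embed1_EL[OF cring_Nov_abelianization ring_hom_push] ua m by simp
  moreover have "push ua = (\<lambda>y. \<one>\<^bsub>H.Nov\<^esub> y - push a y)"
    using ring_hom_one[OF ring_hom_push] push_diff[OF one a(1)] by (simp add: ua_def)
  moreover have "push m = nov_mult (G Mod DG) (monom s (DG #> g)) (\<lambda>y. \<one>\<^bsub>H.Nov\<^esub> y - push b y)"
    using ring_hom_one[OF ring_hom_push] push_diff[OF one b(1)] push_nov_mult[OF monom_NC[OF g] ub]
    by (simp add: m_def ub_def push_monom g)
  moreover have "ab_xi y < 0" if "push a y \<noteq> 0 \<or> push b y \<noteq> 0" for y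
    using that push_negative[OF nov_norm_less_one_negative[OF a]]
      push_negative[OF nov_norm_less_one_negative[OF b]] by blast
  ultimately have "s = 1 \<and> DG #> g = \<one>\<^bsub>G Mod DG\<^esub>"
    using g s by (intro H.one_minus_eq_monom_mult_one_minus) (auto simp: hom_closed)
  then show ?thesis
    using coset_join1[OF _ g derived_is_subgroup] by auto
qed

lemma k1_class_mem_nov_proj:
  assumes "X \<in> NC"
  shows "k1_class Nov X \<in> nov_proj G \<xi> (k1_class Nov X)"
proof -
  have "k1_class Nov X = EL Nov <#>\<^bsub>GL Nov\<^esub> k1_class Nov X"
    using NR.EL_set_mult_rcos NR.finitary_embed1 assms by (simp add: k1_class_def)
  moreover have "EL Nov \<in> nov_trivial G \<xi>"
    using generate.one[of "K1 Nov"] by (simp add: nov_trivial_def K1_def)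
  ultimately show ?thesis by (force simp: nov_proj_def r_coset_def K1_def)
qed

lemma inj_on_nov_proj_W: "inj_on (nov_proj G \<xi>) (nov_W G \<xi>)"
proof (rule inj_onI)
  fix x y assume "x \<in> nov_W G \<xi>" "y \<in> nov_W G \<xi>" and eq: "nov_proj G \<xi> x = nov_proj G \<xi> y"
  then obtain a b where a: "a \<in> NC" "nov_norm \<xi> a < 1" and x: "x = k1_class Nov (\<lambda>h. \<one>\<^bsub>Nov\<^esub> h - a h)"
    and b: "b \<in> NC" "nov_norm \<xi> b < 1" and y: "y = k1_class Nov (\<lambda>h. \<one>\<^bsub>Nov\<^esub> h - b h)"
    by (auto simp: nov_W_def nov_small_units_def)
  have one: "\<one>\<^bsub>Nov\<^esub> \<in> NC" by (simp add: one_Nov monom_NC)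
  have ub: "(\<lambda>h. \<one>\<^bsub>Nov\<^esub> h - b h) \<in> NC" using diff_NC[OF one b(1)] .
  have "x \<in> nov_proj G \<xi> y"
    using k1_class_mem_nov_proj[OF diff_NC[OF one a(1)]] eq x by simp
  then obtain t where "t \<in> nov_trivial G \<xi>" "x = t <#>\<^bsub>GL Nov\<^esub> y"
    by (auto simp: nov_proj_def r_coset_def K1_def)
  then obtain s g where g: "g \<in> carrier G" "s = 1 \<or> s = -1"
    and xt: "x = k1_class Nov (monom s g) <#>\<^bsub>GL Nov\<^esub> y"
    using nov_trivial_subset by blast
  then have "g \<in> DG" "s = 1"
    using k1_class_one_minus_eq_trivial_mult[OF a b] x y by blast+
  then have "x = EL Nov #>\<^bsub>GL Nov\<^esub> mat_mult Nov (embed1 Nov (monom 1 g)) (embed1 Nov (\<lambda>h. \<one>\<^bsub>Nov\<^esub> h - b h))"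
    using xt y NR.k1_class_mult[OF monom_Units(1)[OF g(1)]] NR.finitary_embed1 ub by (simp add: k1_class_def)
  also have "\<dots> = y"
    using NR.EL_rcos_mult_EL embed1_monom_derived_EL[OF \<open>g \<in> DG\<close>] NR.finitary_embed1 ub
    by (simp add: y k1_class_def)
  finally show "x = y" .
qed

end

theorem lemma7p1:
  fixes G :: "('g,'b) monoid_scheme" and \<xi> :: "'g \<Rightarrow> real"
  assumes "group G"
    and "\<forall>x\<in>carrier G. \<forall>y\<in>carrier G. \<xi> (x \<otimes>\<^bsub>G\<^esub> y) = \<xi> x + \<xi> y"
  shows "bij_betw (nov_proj G \<xi>) (nov_W G \<xi>) (nov_proj G \<xi> ` nov_W G \<xi>)"
proof -
  interpret novikov G \<xi>
    using assms by (intro novikov.intro novikov_axioms.intro) auto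
  show ?thesis by (simp add: bij_betw_def inj_on_nov_proj_W)
qed

end
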